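(* Let $\Gamma$ be a finite abelian group of order $n$ with identity $e$, and let $R,S,T \subseteq \Gamma$ with $R = R^{-1}$, $S = S^{-1}$ and $e \notin R \cup S$. Let $G = SC(\Gamma;R,S,T)$ be the semi-Cayley graph defined in the context. Then $\frac{\lambda_3(G)}{2n} \le \frac13$.
   Context: The semi-Cayley graph $SC(\Gamma;R,S,T)$ has vertex set $\Gamma \times \{0,1\}$, and $(h,i) \sim (g,j)$ if and only if one of the following holds: $i=j=0$ and $gh^{-1} \in R$; $i=j=1$ and $gh^{-1}\in S$; $i=0$, $j=1$ and $gh^{-1} \in T$ (the graph is undirected). $\lambda_3$ denotes the third largest eigenvalue (with multiplicity) of the adjacency matrix. *)

theory Defs
  imports "HOL-Analysis.Analysis" "HOL-Computational_Algebra.Polynomial"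
begin

text \<open>Semi-Cayley graph SC(Gamma;R,S,T) on Gamma x {0,1}; the Boolean component
  encodes 0 as False and 1 as True. The group Gamma is abelian, written additively,
  so g h^{-1} becomes g - h and the identity e becomes 0.\<close>

definition semi_cayley_adj ::
  "'g::ab_group_add set \<Rightarrow> 'g set \<Rightarrow> 'g set \<Rightarrow> ('g \<times> bool) \<Rightarrow> ('g \<times> bool) \<Rightarrow> bool" where
  "semi_cayley_adj R S T u v =
     (let (h, i) = u; (g, j) = v in
        (\<not> i \<and> \<not> j \<and> g - h \<in> R) \<or>
        (i \<and> j \<and> g - h \<in> S) \<or>
        (\<not> i \<and> j \<and> g - h \<in> T) \<or>
        (i \<and> \<not> j \<and> h - g \<in> T))"

definition semi_cayley_adj_matrix ::
  "'g::{ab_group_add,finite} set \<Rightarrow> 'g set \<Rightarrow> 'g set \<Rightarrow> real ^ ('g \<times> bool) ^ ('g \<times> bool)" where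
  "semi_cayley_adj_matrix R S T =
     (\<chi> u v. if semi_cayley_adj R S T u v then 1 else 0)"

definition char_poly_mat :: "real ^ 'n ^ 'n \<Rightarrow> real poly" where
  "char_poly_mat A = det (\<chi> i j. (if i = j then [:0, 1:] else 0) - [:A $ i $ j:])"

definition eigenvalues_mset :: "real ^ 'n ^ 'n \<Rightarrow> real multiset" where
  "eigenvalues_mset A = proots (char_poly_mat A)"

definition kth_largest_eigenvalue :: "nat \<Rightarrow> real ^ 'n ^ 'n \<Rightarrow> real" where
  "kth_largest_eigenvalue k A = rev (sorted_list_of_multiset (eigenvalues_mset A)) ! (k - 1)"

end

(*
  The characters psi of Gamma reduce the adjacency matrix to 2 x 2 blocks: on the vectors
  (h, i) |-> psi(h) [i = 0] and (h, i) |-> psi(h) [i = 1] it acts as the Hermitian matrix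
  [[psi(R), psi(T)], [cnj psi(T), psi(S)]], where psi(X) is the sum of psi over X, which is
  real for symmetric X. So the 2n eigenvalues are those of n such blocks, and it suffices to
  show that at most two of them exceed 2n/3.
  For a nontrivial character Re psi(X) <= min (|X|, n - |X|) <= n/2, hence a nontrivial block
  has at most one eigenvalue above 2n/3, and none if the block of the trivial character has two.
  A non-real character has none at all: psi(R), psi(S) and |psi(T)| are bounded by the positive
  masses of Re psi and of Re (w psi) for a suitable phase w, and moment estimates, depending on
  the orders of the values of psi, bound the two masses together by 2n/3. Finally, two distinct
  nontrivial real characters cannot both contribute, by the orthogonality of 1, psi1, psi2 and
  psi1 psi2.
*)

theory Submission
  imports Defs
begin

section \<open>Characters of a finite abelian group\<close>

primrec nsmul :: "nat \<Rightarrow> 'g::ab_group_add \<Rightarrow> 'g" where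
  "nsmul 0 g = 0"
| "nsmul (Suc k) g = g + nsmul k g"

lemma nsmul_add: "nsmul (a + b) g = nsmul a g + nsmul b g"
  by (induction a) (simp_all add: add.assoc)

lemma nsmul_card_eq_0: "nsmul CARD('g) (x :: 'g::{ab_group_add,finite}) = 0"
proof -
  have const: "finite A \<Longrightarrow> (\<Sum>_\<in>A. x) = nsmul (card A) x" for A :: "'g set"
    by (induction A rule: finite_induct) auto
  have "(\<Sum>y\<in>UNIV. x + y) = (\<Sum>y\<in>UNIV. y)"
    by (rule sum.reindex_bij_witness[of _ "\<lambda>y. y - x" "\<lambda>y. x + y"]) auto
  then show ?thesis
    by (simp add: sum.distrib const)
qed

definition add_subgroup :: "'g::ab_group_add set \<Rightarrow> bool" where
  "add_subgroup H \<longleftrightarrow> 0 \<in> H \<and> (\<forall>x\<in>H. \<forall>y\<in>H. x + y \<in> H) \<and> (\<forall>x\<in>H. - x \<in> H)"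

lemma add_subgroupD:
  assumes "add_subgroup H"
  shows add_subgroup_0: "0 \<in> H"
    and add_subgroup_add: "x \<in> H \<Longrightarrow> y \<in> H \<Longrightarrow> x + y \<in> H"
    and add_subgroup_uminus: "x \<in> H \<Longrightarrow> - x \<in> H"
    and add_subgroup_diff: "x \<in> H \<Longrightarrow> y \<in> H \<Longrightarrow> x - y \<in> H"
  using assms unfolding add_subgroup_def by (blast, blast, blast, metis diff_conv_add_uminus)

lemma nsmul_mem_add_subgroup: "add_subgroup H \<Longrightarrow> g \<in> H \<Longrightarrow> nsmul k g \<in> H"
  by (induction k) (auto simp: add_subgroupD)

lemma obtain_order_mod_add_subgroup:
  fixes g :: "'g::{ab_group_add,finite}"
  assumes "add_subgroup H"
  obtains k where "0 < k" "nsmul k g \<in> H" "\<And>j. 0 < j \<Longrightarrow> j < k \<Longrightarrow> nsmul j g \<notin> H"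
proof -
  let ?P = "\<lambda>k. 0 < k \<and> nsmul k g \<in> H"
  have "?P CARD('g)"
    using nsmul_card_eq_0[of g] add_subgroup_0[OF assms] by simp
  then have "?P (Least ?P)"
    by (rule LeastI)
  moreover have "\<not> ?P j" if "j < Least ?P" for j
    using not_less_Least[OF that] .
  ultimately show thesis
    using that by blast
qed

definition character_on :: "'g::ab_group_add set \<Rightarrow> ('g \<Rightarrow> complex) \<Rightarrow> bool" where
  "character_on H f \<longleftrightarrow> f 0 = 1 \<and> (\<forall>x\<in>H. \<forall>y\<in>H. f (x + y) = f x * f y)"

abbreviation character :: "('g::ab_group_add \<Rightarrow> complex) \<Rightarrow> bool" where
  "character \<equiv> character_on UNIV"

lemma character_on_nsmul:
  "add_subgroup H \<Longrightarrow> character_on H f \<Longrightarrow> g \<in> H \<Longrightarrow> f (nsmul k g) = f g ^ k"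
  by (induction k) (auto simp: character_on_def nsmul_mem_add_subgroup)

lemma complex_nth_root_exists: "0 < k \<Longrightarrow> \<exists>z::complex. z ^ k = c"
proof (cases "c = 0")
  case False
  assume "0 < k"
  have "(1::complex) \<in> {z. z ^ k = 1}"
    by simp
  then show ?thesis
    using bij_betw_apply[OF bij_betw_nth_root_unity[OF False \<open>0 < k\<close>]] by blast
qed simp

text \<open>Adjoining \<open>g\<close> to a subgroup \<open>H\<close>, where \<open>k\<close> is the order of \<open>g\<close> modulo \<open>H\<close>: every element
  of the enlarged subgroup is \<open>h + j g\<close> with \<open>h \<in> H\<close> and a unique \<open>j < k\<close>, and a character \<open>f\<close>
  of \<open>H\<close> extends by sending \<open>g\<close> to any \<open>k\<close>-th root \<open>\<omega>\<close> of \<open>f (k g)\<close>.\<close>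

locale cyclic_extension =
  fixes H :: "'g::ab_group_add set" and g :: 'g and k :: nat
  assumes subgroup: "add_subgroup H"
    and order_pos: "0 < k"
    and order_mem: "nsmul k g \<in> H"
    and order_min: "\<And>j. 0 < j \<Longrightarrow> j < k \<Longrightarrow> nsmul j g \<notin> H"
begin

definition extended :: "'g set" where
  "extended = {x. \<exists>j<k. x - nsmul j g \<in> H}"

lemma index_unique:
  assumes "i < k" "j < k" "x - nsmul i g \<in> H" "x - nsmul j g \<in> H"
  shows "i = j"
proof -
  have diff: "nsmul (j - i) g \<in> H" if "i < j" "j < k" "x - nsmul i g \<in> H" "x - nsmul j g \<in> H"
    for i j
  proof -
    have "(x - nsmul i g) - (x - nsmul j g) \<in> H"
      using add_subgroup_diff[OF subgroup that(3,4)] .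
    moreover have "nsmul j g = nsmul (j - i) g + nsmul i g"
      using nsmul_add[of "j - i" i g] \<open>i < j\<close> by simp
    ultimately show ?thesis
      by simp
  qed
  show ?thesis
    using diff[of i j] diff[of j i] order_min[of "j - i"] order_min[of "i - j"] assms
    by (cases i j rule: linorder_cases) auto
qed

definition index :: "'g \<Rightarrow> nat" where
  "index x = (THE j. j < k \<and> x - nsmul j g \<in> H)"

lemma index_eq: "j < k \<Longrightarrow> x - nsmul j g \<in> H \<Longrightarrow> index x = j"
  unfolding index_def using index_unique by (intro the_equality) auto

lemma subset_extended: "H \<subseteq> extended"
  using order_pos by (auto simp: extended_def intro!: exI[of _ 0])

lemma add_subgroup_extended: "add_subgroup extended"
  unfolding add_subgroup_def
proof (intro conjI ballI)
  show "0 \<in> extended"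
    using subset_extended add_subgroup_0[OF subgroup] by blast
next
  fix x y assume "x \<in> extended" "y \<in> extended"
  then obtain i j where ij: "i < k" "x - nsmul i g \<in> H" "j < k" "y - nsmul j g \<in> H"
    by (auto simp: extended_def)
  then have sum: "(x + y) - nsmul (i + j) g \<in> H"
    using add_subgroup_add[OF subgroup ij(2,4)] by (simp add: nsmul_add algebra_simps)
  show "x + y \<in> extended"
  proof (cases "i + j < k")
    case True
    then show ?thesis
      using sum by (auto simp: extended_def)
  next
    case False
    then have e: "(x + y) - nsmul (i + j - k) g = ((x + y) - nsmul (i + j) g) + nsmul k g"
      using nsmul_add[of k "i + j - k" g] by (simp add: algebra_simps)
    have "(x + y) - nsmul (i + j - k) g \<in> H"
      unfolding e by (rule add_subgroup_add[OF subgroup sum order_mem])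
    moreover have "i + j - k < k"
      using ij(1,3) by arith
    ultimately show ?thesis
      unfolding extended_def by blast
  qed
next
  fix x assume "x \<in> extended"
  then obtain i where i: "i < k" "x - nsmul i g \<in> H"
    by (auto simp: extended_def)
  have e: "- x - nsmul (k - i) g = - (x - nsmul i g) - nsmul k g"
    using nsmul_add[of "k - i" i g] i(1) by (simp add: algebra_simps)
  have "- x - nsmul (k - i) g \<in> H"
    unfolding e using add_subgroupD[OF subgroup] i(2) order_mem by blast
  moreover have "- x - nsmul 0 g \<in> H" if "i = 0"
    using add_subgroup_uminus[OF subgroup i(2)] that by simp
  moreover have "k - i < k" if "i \<noteq> 0"
    using that i(1) by simp
  ultimately show "- x \<in> extended"
    unfolding extended_def using order_pos by (cases "i = 0") blast+
qed

lemma mem_extended: "g \<in> extended"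
proof (cases "k = 1")
  case True
  then show ?thesis
    using order_mem subset_extended by auto
next
  case False
  then have "1 < k"
    using order_pos by simp
  moreover have "g - nsmul 1 g \<in> H"
    using add_subgroup_0[OF subgroup] by simp
  ultimately show ?thesis
    unfolding extended_def by blast
qed

definition extend :: "('g \<Rightarrow> complex) \<Rightarrow> complex \<Rightarrow> 'g \<Rightarrow> complex" where
  "extend f \<omega> x = f (x - nsmul (index x) g) * \<omega> ^ index x"

lemma extend_eq: "j < k \<Longrightarrow> x - nsmul j g \<in> H \<Longrightarrow> extend f \<omega> x = f (x - nsmul j g) * \<omega> ^ j"
  by (simp add: extend_def index_eq)

lemma extend_eq_on_subgroup: "x \<in> H \<Longrightarrow> extend f \<omega> x = f x"
  using extend_eq[of 0 x] order_pos by simp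

lemma extend_generator:
  assumes "character_on H f" "g \<notin> H"
  shows "extend f \<omega> g = \<omega>"
proof -
  have "k \<noteq> 1"
    using assms(2) order_mem by auto
  then show ?thesis
    using extend_eq[of 1 g] order_pos add_subgroup_0[OF subgroup] assms(1)
    by (simp add: character_on_def)
qed

lemma character_on_extend:
  assumes f: "character_on H f" and \<omega>: "\<omega> ^ k = f (nsmul k g)"
  shows "character_on extended (extend f \<omega>)"
  unfolding character_on_def
proof (intro conjI ballI)
  show "extend f \<omega> 0 = 1"
    using f extend_eq_on_subgroup add_subgroup_0[OF subgroup] by (simp add: character_on_def)
next
  fix x y assume "x \<in> extended" "y \<in> extended"
  then obtain i j where ij: "i < k" "x - nsmul i g \<in> H" "j < k" "y - nsmul j g \<in> H"
    by (auto simp: extended_def)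
  define h where "h = (x - nsmul i g) + (y - nsmul j g)"
  have h: "h \<in> H"
    unfolding h_def using add_subgroup_add[OF subgroup ij(2,4)] .
  have fh: "f h = f (x - nsmul i g) * f (y - nsmul j g)"
    using f ij unfolding h_def character_on_def by blast
  have xy: "extend f \<omega> x * extend f \<omega> y = f h * \<omega> ^ (i + j)"
    using extend_eq[OF ij(1,2)] extend_eq[OF ij(3,4)] fh by (simp add: power_add mult_ac)
  show "extend f \<omega> (x + y) = extend f \<omega> x * extend f \<omega> y"
  proof (cases "i + j < k")
    case True
    have "x + y - nsmul (i + j) g = h"
      by (simp add: h_def nsmul_add algebra_simps)
    then show ?thesis
      using extend_eq[of "i + j" "x + y"] True h xy by simp
  next
    case False
    define l where "l = i + j - k"
    have l: "l < k" "i + j = k + l"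
      using False ij by (auto simp: l_def)
    have e: "x + y - nsmul l g = h + nsmul k g"
      using nsmul_add[of i j g] nsmul_add[of k l g] l(2) by (simp add: h_def algebra_simps)
    have "f (h + nsmul k g) = f h * \<omega> ^ k"
      using f h order_mem \<omega> unfolding character_on_def by simp
    then show ?thesis
      using extend_eq[of l "x + y"] l add_subgroup_add[OF subgroup h order_mem] xy e
      by (simp add: power_add mult_ac)
  qed
qed

end

lemma character_on_extends_to_character:
  fixes H :: "'g::{ab_group_add,finite} set"
  shows "add_subgroup H \<Longrightarrow> character_on H f \<Longrightarrow> \<exists>F. character F \<and> (\<forall>x\<in>H. F x = f x)"
proof (induction "card (UNIV - H)" arbitrary: H f rule: less_induct)
  case less
  show ?case
  proof (cases "H = UNIV")
    case False
    then obtain g where g: "g \<notin> H"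
      by blast
    obtain k where "cyclic_extension H g k"
      using obtain_order_mod_add_subgroup[OF less.prems(1), of g]
      by (metis cyclic_extension.intro less.prems(1))
    then interpret cyclic_extension H g k .
    obtain \<omega> where \<omega>: "\<omega> ^ k = f (nsmul k g)"
      using complex_nth_root_exists[OF order_pos] by blast
    have "card (UNIV - extended) < card (UNIV - H)"
      using subset_extended mem_extended g by (intro psubset_card_mono) auto
    then obtain F where F: "character F" "\<forall>x\<in>extended. F x = extend f \<omega> x"
      using less.hyps add_subgroup_extended character_on_extend[OF less.prems(2) \<omega>] by blast
    have "F x = f x" if "x \<in> H" for x
      using F(2) subset_extended that extend_eq_on_subgroup[OF that, of f \<omega>] by auto
    with F(1) show ?thesis
      by blast
  qed (use less.prems in blast)
qed

lemma character_separates: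
  fixes x :: "'g::{ab_group_add,finite}"
  assumes "x \<noteq> 0"
  obtains F where "character F" "F x \<noteq> 1"
proof -
  have H: "add_subgroup {0::'g}"
    by (simp add: add_subgroup_def)
  obtain k where "cyclic_extension {0} x k"
    using obtain_order_mod_add_subgroup[OF H, of x] by (metis cyclic_extension.intro H)
  then interpret cyclic_extension "{0}" x k .
  have "k \<noteq> 1"
    using order_mem assms by auto
  then have k: "2 \<le> k"
    using order_pos by simp
  have "\<not> {z::complex. z ^ k = 1} \<subseteq> {1}"
    using card_mono[of "{1}" "{z::complex. z ^ k = 1}"] card_roots_unity_eq[OF order_pos] k by auto
  then obtain \<omega> :: complex where \<omega>: "\<omega> ^ k = 1" "\<omega> \<noteq> 1"
    by blast
  have "character_on {0} (\<lambda>_. 1)"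
    by (simp add: character_on_def)
  then have "character_on extended (extend (\<lambda>_. 1) \<omega>)"
    by (rule character_on_extend) (simp add: \<omega>(1))
  then obtain F where F: "character F" "\<forall>y\<in>extended. F y = extend (\<lambda>_. 1) \<omega> y"
    using character_on_extends_to_character[OF add_subgroup_extended] by blast
  have "F x = \<omega>"
    using F(2) mem_extended extend_generator[OF \<open>character_on {0} (\<lambda>_. 1)\<close>] assms by simp
  then show thesis
    using that F(1) \<omega>(2) by simp
qed

lemma character_add: "character f \<Longrightarrow> f (x + y) = f x * f y"
  by (simp add: character_on_def)

lemma character_0 [simp]: "character f \<Longrightarrow> f 0 = 1"
  by (simp add: character_on_def)

lemma character_power_card:
  fixes f :: "'g::{ab_group_add,finite} \<Rightarrow> complex"
  assumes "character f"
  shows "f x ^ CARD('g) = 1"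
proof -
  have "add_subgroup (UNIV :: 'g set)"
    by (simp add: add_subgroup_def)
  then show ?thesis
    using character_on_nsmul[OF _ assms, of x "CARD('g)"] nsmul_card_eq_0[of x] assms by simp
qed

lemma norm_character:
  fixes f :: "'g::{ab_group_add,finite} \<Rightarrow> complex"
  assumes "character f"
  shows "norm (f x) = 1"
proof -
  have "norm (f x) ^ CARD('g) = 1 ^ CARD('g)"
    using character_power_card[OF assms, of x] by (simp flip: norm_power)
  then show ?thesis
    by (rule power_eq_imp_eq_base) auto
qed

lemma unit_cnj_mult: "norm z = 1 \<Longrightarrow> cnj z * z = 1"
  using complex_norm_square[of z] by (simp add: mult.commute)

lemma character_cnj_mult: "character f \<Longrightarrow> cnj (f x) * f x = 1"
  for f :: "'g::{ab_group_add,finite} \<Rightarrow> complex"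
  by (simp add: unit_cnj_mult norm_character)

lemma character_nonzero: "character f \<Longrightarrow> f x \<noteq> 0"
  for f :: "'g::{ab_group_add,finite} \<Rightarrow> complex"
  using norm_character[of f x] by auto

lemma character_uminus: "character f \<Longrightarrow> f (- x) = cnj (f x)"
  for f :: "'g::{ab_group_add,finite} \<Rightarrow> complex"
  using character_add[of f "- x" x] character_cnj_mult[of f x] character_nonzero[of f x]
  by (metis add.left_inverse character_0 mult_cancel_right)

lemma character_mult: "character f \<Longrightarrow> character g \<Longrightarrow> character (\<lambda>x. f x * g x)"
  by (simp add: character_on_def mult_ac)

lemma character_cnj: "character f \<Longrightarrow> character (\<lambda>x. cnj (f x))"
  by (simp add: character_on_def)

lemma character_const_1: "character (\<lambda>_. 1)"
  by (simp add: character_on_def)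

lemma character_power: "character f \<Longrightarrow> character (\<lambda>x. f x ^ j)"
  by (simp add: character_on_def power_mult_distrib)

lemma sum_character_eq_0:
  fixes f :: "'g::{ab_group_add,finite} \<Rightarrow> complex"
  assumes f: "character f" and h: "f h \<noteq> 1"
  shows "(\<Sum>x\<in>UNIV. f x) = 0"
proof -
  have "(\<Sum>x\<in>UNIV. f x) = (\<Sum>x\<in>UNIV. f (x + h))"
    by (rule sum.reindex_bij_witness[of _ "\<lambda>y. y + h" "\<lambda>y. y - h"]) auto
  also have "\<dots> = f h * (\<Sum>x\<in>UNIV. f x)"
    by (simp add: character_add[OF f] sum_distrib_left mult_ac)
  finally have "(1 - f h) * (\<Sum>x\<in>UNIV. f x) = 0"
    by (simp add: algebra_simps)
  then show ?thesis
    using h by simp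
qed

lemma sum_nontrivial_character:
  fixes f :: "'g::{ab_group_add,finite} \<Rightarrow> complex"
  shows "character f \<Longrightarrow> f \<noteq> (\<lambda>_. 1) \<Longrightarrow> (\<Sum>x\<in>UNIV. f x) = 0"
  using sum_character_eq_0 by blast

lemma finite_characters: "finite {f :: 'g::{ab_group_add,finite} \<Rightarrow> complex. character f}"
proof (rule finite_subset)
  show "{f :: 'g \<Rightarrow> complex. character f} \<subseteq>
      {f. \<forall>x. (x \<in> UNIV \<longrightarrow> f x \<in> {z. z ^ CARD('g) = 1}) \<and> (x \<notin> UNIV \<longrightarrow> f x = 0)}"
    using character_power_card by blast
  show "finite {f :: 'g \<Rightarrow> complex.
      \<forall>x. (x \<in> UNIV \<longrightarrow> f x \<in> {z. z ^ CARD('g) = 1}) \<and> (x \<notin> UNIV \<longrightarrow> f x = 0)}"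
    by (intro finite_set_of_finite_funs finite_roots_unity) auto
qed

lemma character_orthogonality:
  fixes f g :: "'g::{ab_group_add,finite} \<Rightarrow> complex"
  assumes f: "character f" and g: "character g"
  shows "(\<Sum>x\<in>UNIV. cnj (f x) * g x) = (if f = g then of_nat CARD('g) else 0)"
proof (cases "f = g")
  case False
  then obtain h where "f h \<noteq> g h"
    by blast
  moreover have "cnj (f h) \<noteq> 0"
    using character_nonzero[OF f, of h] by simp
  ultimately have "cnj (f h) * g h \<noteq> cnj (f h) * f h"
    by simp
  then have "cnj (f h) * g h \<noteq> 1"
    using character_cnj_mult[OF f, of h] by simp
  then show ?thesis
    using sum_character_eq_0[OF character_mult[OF character_cnj[OF f] g]] False by simp
qed (use character_cnj_mult[OF f] in simp)

lemma sum_characters_eq_0: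
  fixes x :: "'g::{ab_group_add,finite}"
  assumes "x \<noteq> 0"
  shows "(\<Sum>f\<in>{f. character f}. f x) = 0"
proof -
  obtain \<psi> where \<psi>: "character \<psi>" "\<psi> x \<noteq> 1"
    using character_separates[OF assms] .
  let ?X = "{f :: 'g \<Rightarrow> complex. character f}"
  have inv: "\<psi> y * (cnj (\<psi> y) * c) = c" "cnj (\<psi> y) * (\<psi> y * c) = c" for y c
    using character_cnj_mult[OF \<psi>(1), of y]
    by (simp_all add: mult.assoc[symmetric] mult.commute[of "\<psi> y"])
  have "(\<Sum>f\<in>?X. f x) = (\<Sum>f\<in>?X. \<psi> x * f x)"
  proof (rule sum.reindex_bij_witness[of _ "\<lambda>f y. \<psi> y * f y" "\<lambda>f y. cnj (\<psi> y) * f y"])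
    fix f assume "f \<in> ?X"
    then show "(\<lambda>y. \<psi> y * f y) \<in> ?X" "(\<lambda>y. cnj (\<psi> y) * f y) \<in> ?X"
      using character_mult[OF \<psi>(1)] character_mult[OF character_cnj[OF \<psi>(1)]] by auto
    show "(\<lambda>y. \<psi> y * (cnj (\<psi> y) * f y)) = f" "(\<lambda>y. cnj (\<psi> y) * (\<psi> y * f y)) = f"
      "\<psi> x * (cnj (\<psi> x) * f x) = f x"
      by (simp_all only: inv)
  qed
  also have "\<dots> = \<psi> x * (\<Sum>f\<in>?X. f x)"
    by (simp add: sum_distrib_left)
  finally have "(1 - \<psi> x) * (\<Sum>f\<in>?X. f x) = 0"
    by (simp add: algebra_simps)
  then show ?thesis
    using \<psi>(2) by simp
qed

text \<open>Double counting of \<open>\<Sum>\<^sub>f \<Sum>\<^sub>x f x\<close>: only the trivial character contributes to the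
  inner sums over \<open>x\<close>, and only \<open>x = 0\<close> contributes to the inner sums over \<open>f\<close>.\<close>

lemma card_characters: "card {f :: 'g::{ab_group_add,finite} \<Rightarrow> complex. character f} = CARD('g)"
proof -
  let ?X = "{f :: 'g \<Rightarrow> complex. character f}"
  have "(\<Sum>f\<in>?X. \<Sum>x\<in>UNIV. f x) = (\<Sum>f\<in>?X. if f = (\<lambda>_. 1) then of_nat CARD('g) else 0)"
    by (intro sum.cong refl) (auto simp: sum_nontrivial_character)
  also have "\<dots> = of_nat CARD('g)"
    using character_const_1 by (simp add: sum.delta[OF finite_characters])
  finally have "(\<Sum>f\<in>?X. \<Sum>x\<in>UNIV. f x) = of_nat CARD('g)" .
  moreover have "(\<Sum>x\<in>UNIV. \<Sum>f\<in>?X. f x) = (\<Sum>x\<in>UNIV. if x = (0::'g) then of_nat (card ?X) else (0::complex))"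
    by (intro sum.cong refl) (auto simp: sum_characters_eq_0)
  ultimately have "(of_nat (card ?X) :: complex) = of_nat CARD('g)"
    by (simp add: sum.swap[of _ ?X])
  then show ?thesis
    using of_nat_eq_iff by blast
qed

lemma obtain_character_enumeration:
  obtains \<beta> :: "'g::{ab_group_add,finite} \<Rightarrow> 'g \<Rightarrow> complex"
  where "bij_betw \<beta> UNIV {f. character f}"
  using finite_same_card_bij[OF finite finite_characters] card_characters by metis

section \<open>The spectrum of a semi-Cayley graph\<close>


lemma poly_det: "poly (det (P :: real poly^'n^'n)) x = det (\<chi> i j. poly (P$i$j) x)"
  unfolding det_def by (simp add: poly_sum poly_prod)

lemma of_real_det: "complex_of_real (det (M :: real^'n^'n)) = det (\<chi> i j. complex_of_real (M$i$j))"
  unfolding det_def by (simp add: of_real_sum of_real_prod)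

lemma poly_char_poly_mat: "poly (char_poly_mat A) x = det (\<chi> i j. (if i = j then x else 0) - A$i$j)"
  unfolding char_poly_mat_def poly_det by (rule arg_cong[where f = det]) (auto simp: vec_eq_iff)

lemma det_nonzero_if_orthogonal_columns:
  fixes U :: "complex^'n^'n"
  assumes orth: "\<And>p q. p \<noteq> q \<Longrightarrow> (\<Sum>u\<in>UNIV. cnj (U$u$p) * U$u$q) = 0"
    and nonzero: "\<And>p. (\<Sum>u\<in>UNIV. cnj (U$u$p) * U$u$p) \<noteq> 0"
  shows "det U \<noteq> 0"
proof -
  define Uh :: "complex^'n^'n" where "Uh = (\<chi> p q. cnj (U$q$p))"
  have entry: "(Uh ** U)$p$q = (\<Sum>u\<in>UNIV. cnj (U$u$p) * U$u$q)" for p q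
    by (simp add: Uh_def matrix_matrix_mult_def)
  have "det Uh * det U = (\<Prod>p\<in>UNIV. (\<Sum>u\<in>UNIV. cnj (U$u$p) * U$u$p))"
    by (simp add: det_mul[symmetric] det_diagonal entry orth)
  also have "\<dots> \<noteq> 0"
    using nonzero by simp
  finally show ?thesis
    by auto
qed

lemma det_scalar_minus_eq_prod_if_eigenbasis:
  fixes A U :: "'a::field^'n^'n" and d :: "'n \<Rightarrow> 'a"
  assumes U: "det U \<noteq> 0"
    and eigen: "\<And>p q. (\<Sum>u\<in>UNIV. A$p$u * U$u$q) = d q * U$p$q"
  shows "det (\<chi> p q. (if p = q then x else 0) - A$p$q) = (\<Prod>q\<in>UNIV. x - d q)"
proof -
  define M where "M = (\<chi> p q. (if p = q then x else 0) - A$p$q)"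
  define D :: "'a^'n^'n" where "D = (\<chi> p q. if p = q then x - d q else 0)"
  have "(M ** U)$p$q = (U ** D)$p$q" for p q
  proof -
    have diag: "(\<Sum>u\<in>UNIV. (if p = u then x else 0) * U$u$q) = x * U$p$q"
      by (simp add: if_distrib if_distribR cong: if_cong)
    have "(M ** U)$p$q = (\<Sum>u\<in>UNIV. (if p = u then x else 0) * U$u$q) - (\<Sum>u\<in>UNIV. A$p$u * U$u$q)"
      by (simp add: M_def matrix_matrix_mult_def left_diff_distrib sum_subtractf)
    also have "\<dots> = U$p$q * (x - d q)"
      unfolding diag eigen by (simp add: algebra_simps)
    also have "\<dots> = (U ** D)$p$q"
      by (simp add: D_def matrix_matrix_mult_def if_distrib if_distribR cong: if_cong)
    finally show ?thesis .
  qed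
  then have "M ** U = U ** D"
    by (simp add: vec_eq_iff)
  then have "det U * det M = det U * det D"
    by (metis det_mul mult.commute)
  then show ?thesis
    using U by (simp add: M_def[symmetric] D_def det_diagonal)
qed

lemma char_poly_mat_eq_prod_if_eigenbasis:
  fixes A :: "real^'n^'n" and U :: "complex^'n^'n" and d :: "'n \<Rightarrow> real"
  assumes U: "det U \<noteq> 0"
    and eigen: "\<And>p q. (\<Sum>u\<in>UNIV. of_real (A$p$u) * U$u$q) = of_real (d q) * U$p$q"
  shows "char_poly_mat A = (\<Prod>q\<in>UNIV. [:- d q, 1:])"
proof -
  have "complex_of_real (poly (char_poly_mat A) x) = complex_of_real (\<Prod>q\<in>UNIV. x - d q)" for x
  proof -
    have "complex_of_real (poly (char_poly_mat A) x)
        = det (\<chi> p q. (if p = q then of_real x else 0) - (\<chi> i j. complex_of_real (A$i$j))$p$q)"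
      unfolding poly_char_poly_mat of_real_det
      by (rule arg_cong[where f = det]) (auto simp: vec_eq_iff)
    also have "\<dots> = (\<Prod>q\<in>UNIV. of_real x - of_real (d q))"
      by (rule det_scalar_minus_eq_prod_if_eigenbasis[OF U]) (simp add: eigen)
    finally show ?thesis
      by (simp add: of_real_prod)
  qed
  then have "poly (char_poly_mat A) x = poly (\<Prod>q\<in>UNIV. [:- d q, 1:]) x" for x
    unfolding of_real_eq_iff by (simp add: poly_prod)
  then show ?thesis
    by (simp add: poly_eq_poly_eq_iff[symmetric] fun_eq_iff)
qed

text \<open>The Hermitian matrix \<open>[[r, t], [cnj t, s]]\<close> applied to \<open>w\<close>; row \<open>False\<close> is the first row.\<close>

definition block_apply :: "real \<Rightarrow> real \<Rightarrow> complex \<Rightarrow> (bool \<Rightarrow> complex) \<Rightarrow> bool \<Rightarrow> complex" where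
  "block_apply r s t w k =
     (if k then cnj t * w False + of_real s * w True else of_real r * w False + t * w True)"

lemma sum_UNIV_bool: "(\<Sum>k\<in>UNIV. f k) = f False + f True"
  by (simp add: UNIV_bool)

lemma block_apply_eigenvector:
  assumes "(d - r) * (d - s) = (cmod t)\<^sup>2"
  shows "block_apply r s t (\<lambda>k. if k then of_real (d - r) else t) k
       = of_real d * (if k then of_real (d - r) else t)"
proof -
  have "cnj t * t + of_real s * of_real (d - r) = complex_of_real ((cmod t)\<^sup>2 + s * (d - r))"
    using complex_norm_square[of t] by (simp add: mult.commute)
  also have "(cmod t)\<^sup>2 + s * (d - r) = d * (d - r)"
    using assms by (simp add: algebra_simps)
  finally show ?thesis
    by (cases k) (simp_all add: block_apply_def algebra_simps)
qed

definition block_eigendata ::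
  "real \<Rightarrow> real \<Rightarrow> complex \<Rightarrow> (bool \<Rightarrow> real) \<Rightarrow> (bool \<Rightarrow> bool \<Rightarrow> complex) \<Rightarrow> bool" where
  "block_eigendata r s t d w \<longleftrightarrow>
     (\<forall>i k. block_apply r s t (w i) k = of_real (d i) * w i k) \<and>
     (\<forall>i. (\<Sum>k\<in>UNIV. cnj (w i k) * w i k) \<noteq> 0) \<and>
     (\<Sum>k\<in>UNIV. cnj (w False k) * w True k) = 0 \<and>
     d False + d True = r + s \<and> d False * d True = r * s - (cmod t)\<^sup>2"

lemma ex_block_eigendata: "\<exists>d w. block_eigendata r s t d w"
proof (cases "t = 0")
  case True
  show ?thesis
    by (intro exI[of _ "\<lambda>i. if i then s else r"] exI[of _ "\<lambda>i k. if k = i then 1 else 0"])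
      (auto simp: block_eigendata_def block_apply_def True sum_UNIV_bool)
next
  case False
  define D where "D = sqrt (((r - s) / 2)\<^sup>2 + (cmod t)\<^sup>2)"
  have D: "D\<^sup>2 = ((r - s) / 2)\<^sup>2 + (cmod t)\<^sup>2"
    unfolding D_def by simp
  define d where "d i = (r + s) / 2 + (if i then - D else D)" for i
  define w where "w i = (\<lambda>k. if k then complex_of_real (d i - r) else t)" for i
  have root: "(d i - r) * (d i - s) = (cmod t)\<^sup>2" for i
    using D by (cases i) (simp_all add: d_def power2_eq_square field_simps)
  have tt: "cnj t * t = complex_of_real ((cmod t)\<^sup>2)"
    using complex_norm_square[of t] by (simp add: mult.commute)
  have gram: "(\<Sum>k\<in>UNIV. cnj (w i k) * w j k) = complex_of_real ((cmod t)\<^sup>2 + (d i - r) * (d j - r))"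
    for i j
    by (simp add: w_def sum_UNIV_bool tt)
  show ?thesis
    unfolding block_eigendata_def
  proof (intro exI[of _ d] exI[of _ w] conjI allI)
    show "block_apply r s t (w i) k = of_real (d i) * w i k" for i k
      unfolding w_def by (rule block_apply_eigenvector[OF root])
    have "(cmod t)\<^sup>2 + (d i - r) * (d i - r) > 0" for i
      using False by (simp add: add_pos_nonneg)
    then show "(\<Sum>k\<in>UNIV. cnj (w i k) * w i k) \<noteq> 0" for i
      unfolding gram by (metis of_real_eq_0_iff less_irrefl)
    have "(cmod t)\<^sup>2 + (d False - r) * (d True - r) = 0"
      using D by (simp add: d_def power2_eq_square field_simps)
    then show "(\<Sum>k\<in>UNIV. cnj (w False k) * w True k) = 0"
      unfolding gram by simp
    show "d False + d True = r + s"
      by (simp add: d_def)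
    show "d False * d True = r * s - (cmod t)\<^sup>2"
      using D by (simp add: d_def power2_eq_square field_simps)
  qed
qed

lemma obtain_block_eigendata_family:
  fixes r s :: "'a \<Rightarrow> real" and t :: "'a \<Rightarrow> complex"
  obtains d w where "\<And>y. block_eigendata (r y) (s y) (t y) (d y) (w y)"
proof -
  have "\<forall>y. \<exists>dw. block_eigendata (r y) (s y) (t y) (fst dw) (snd dw)"
    using ex_block_eigendata by simp
  then obtain dw where "\<And>y. block_eigendata (r y) (s y) (t y) (fst (dw y)) (snd (dw y))"
    using choice[of "\<lambda>y dw. block_eigendata (r y) (s y) (t y) (fst dw) (snd dw)"] by blast
  then show thesis
    using that[where d = "\<lambda>y. fst (dw y)" and w = "\<lambda>y. snd (dw y)"] by blast
qed

lemma sum_shift_character: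
  fixes \<psi> :: "'g::{ab_group_add,finite} \<Rightarrow> complex"
  assumes "character \<psi>"
  shows "(\<Sum>g\<in>UNIV. if g - h \<in> X then \<psi> g else 0) = \<psi> h * (\<Sum>x\<in>X. \<psi> x)"
proof -
  have "(\<Sum>g\<in>UNIV. if g - h \<in> X then \<psi> g else 0) = (\<Sum>x\<in>UNIV. if x \<in> X then \<psi> (x + h) else 0)"
    by (rule sum.reindex_bij_witness[of _ "\<lambda>x. x + h" "\<lambda>g. g - h"]) auto
  also have "\<dots> = (\<Sum>x\<in>X. \<psi> h * \<psi> x)"
    by (simp add: sum.If_cases character_add[OF assms] mult.commute)
  finally show ?thesis
    by (simp add: sum_distrib_left)
qed

lemma sum_reflect_character:
  fixes \<psi> :: "'g::{ab_group_add,finite} \<Rightarrow> complex"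
  assumes "character \<psi>"
  shows "(\<Sum>g\<in>UNIV. if h - g \<in> X then \<psi> g else 0) = \<psi> h * cnj (\<Sum>x\<in>X. \<psi> x)"
proof -
  have "(\<Sum>g\<in>UNIV. if h - g \<in> X then \<psi> g else 0) = (\<Sum>x\<in>UNIV. if x \<in> X then \<psi> (h - x) else 0)"
    by (rule sum.reindex_bij_witness[of _ "\<lambda>x. h - x" "\<lambda>g. h - g"]) auto
  also have "\<dots> = (\<Sum>x\<in>X. \<psi> (h - x))"
    by (simp add: sum.If_cases)
  also have "\<dots> = (\<Sum>x\<in>X. \<psi> h * cnj (\<psi> x))"
    using character_add[OF assms, of h "- x" for x] character_uminus[OF assms] by simp
  finally show ?thesis
    by (simp add: sum_distrib_left)
qed

lemma sum_character_symmetric_real: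
  fixes \<psi> :: "'g::{ab_group_add,finite} \<Rightarrow> complex"
  assumes X: "uminus ` X = X" and \<psi>: "character \<psi>"
  shows "(\<Sum>x\<in>X. \<psi> x) = of_real (Re (\<Sum>x\<in>X. \<psi> x))"
proof -
  define z where "z = (\<Sum>x\<in>X. \<psi> x)"
  have "cnj z = (\<Sum>x\<in>X. \<psi> (- x))"
    by (simp add: z_def character_uminus[OF \<psi>])
  also have "\<dots> = (\<Sum>x\<in>uminus ` X. \<psi> x)"
    by (subst sum.reindex) (auto simp: inj_on_def)
  finally have "cnj z = z"
    using X by (simp add: z_def)
  then have "Im (cnj z) = Im z"
    by simp
  then have "Im z = 0"
    by simp
  then show ?thesis
    by (simp add: z_def[symmetric] complex_eq_iff)
qed

lemma sum_UNIV_times_bool: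
  "(\<Sum>u\<in>UNIV. f u) = (\<Sum>g\<in>UNIV. f (g, False)) + (\<Sum>g\<in>UNIV. f (g, True))"
  for f :: "'a::finite \<times> bool \<Rightarrow> 'b::comm_monoid_add"
proof -
  have "(\<Sum>u\<in>UNIV. f u) = (\<Sum>u\<in>UNIV \<times> UNIV. f u)"
    by (simp add: UNIV_Times_UNIV)
  also have "\<dots> = (\<Sum>g\<in>UNIV. \<Sum>j\<in>UNIV. f (g, j))"
    by (subst sum.cartesian_product) (simp add: case_prod_beta)
  finally show ?thesis
    by (simp add: sum_UNIV_bool sum.distrib)
qed

lemma semi_cayley_adj_matrix_mult_character:
  fixes R S T :: "'g::{ab_group_add,finite} set" and \<psi> :: "'g \<Rightarrow> complex"
  assumes \<psi>: "character \<psi>" and R: "uminus ` R = R" and S: "uminus ` S = S"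
  shows "(\<Sum>u\<in>UNIV. of_real (semi_cayley_adj_matrix R S T $ (h, k) $ u) * (\<psi> (fst u) * z (snd u)))
    = \<psi> h * block_apply (Re (\<Sum>x\<in>R. \<psi> x)) (Re (\<Sum>x\<in>S. \<psi> x)) (\<Sum>x\<in>T. \<psi> x) z k"
proof -
  define a where "a j = (\<Sum>g\<in>UNIV. of_real (semi_cayley_adj_matrix R S T $ (h, k) $ (g, j)) * \<psi> g)"
    for j
  have "(\<Sum>u\<in>UNIV. of_real (semi_cayley_adj_matrix R S T $ (h, k) $ u) * (\<psi> (fst u) * z (snd u)))
      = a False * z False + a True * z True"
    by (simp add: sum_UNIV_times_bool a_def sum_distrib_right mult.assoc)
  moreover have "a j = (\<Sum>g\<in>UNIV. if g - h \<in> (if k then (if j then S else {}) else if j then T else R)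
      then \<psi> g else 0) + (\<Sum>g\<in>UNIV. if h - g \<in> (if k \<and> \<not> j then T else {}) then \<psi> g else 0)"
    for j
    by (cases k; cases j)
      (auto simp: a_def semi_cayley_adj_matrix_def semi_cayley_adj_def sum.distrib[symmetric]
        intro!: sum.cong)
  ultimately show ?thesis
    using sum_character_symmetric_real[OF R \<psi>] sum_character_symmetric_real[OF S \<psi>]
    by (cases k) (simp_all add: sum_shift_character[OF \<psi>] sum_reflect_character[OF \<psi>]
        block_apply_def algebra_simps)
qed

lemma sum_UNIV_times_mult:
  "(\<Sum>u\<in>UNIV. f (fst u) * g (snd u)) = (\<Sum>a\<in>UNIV. f a) * (\<Sum>b\<in>UNIV. g b)"
  for f :: "'a::finite \<Rightarrow> 'c::comm_semiring_0" and g :: "'b::finite \<Rightarrow> 'c"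
proof -
  have "(\<Sum>u\<in>UNIV. f (fst u) * g (snd u)) = (\<Sum>u\<in>UNIV \<times> UNIV. f (fst u) * g (snd u))"
    by (simp add: UNIV_Times_UNIV)
  also have "\<dots> = (\<Sum>a\<in>UNIV. \<Sum>b\<in>UNIV. f a * g b)"
    by (subst sum.cartesian_product) (simp add: case_prod_beta)
  finally show ?thesis
    by (simp add: sum_product)
qed

lemma det_character_tensor_nonzero:
  fixes \<beta> :: "'g::{ab_group_add,finite} \<Rightarrow> 'g \<Rightarrow> complex" and w :: "'g \<Rightarrow> bool \<Rightarrow> bool \<Rightarrow> complex"
  assumes \<beta>: "bij_betw \<beta> UNIV {f. character f}"
    and nonzero: "\<And>y i. (\<Sum>k\<in>UNIV. cnj (w y i k) * w y i k) \<noteq> 0"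
    and orth: "\<And>y. (\<Sum>k\<in>UNIV. cnj (w y False k) * w y True k) = 0"
  shows "det (\<chi> p q. \<beta> (fst q) (fst p) * w (fst q) (snd q) (snd p)) \<noteq> 0"
proof (rule det_nonzero_if_orthogonal_columns)
  have chars: "character (\<beta> y)" for y
    using \<beta> by (auto simp: bij_betw_def)
  have inj: "\<beta> y = \<beta> y' \<Longrightarrow> y = y'" for y y'
    using \<beta> by (auto simp: bij_betw_def inj_on_def)
  have orth': "(\<Sum>k\<in>UNIV. cnj (w y i k) * w y i' k) = 0" if "i \<noteq> i'" for y i i'
  proof -
    have "(\<Sum>k\<in>UNIV. cnj (w y True k) * w y False k) = cnj (\<Sum>k\<in>UNIV. cnj (w y False k) * w y True k)"
      by (simp add: mult.commute)
    then show ?thesis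
      using orth[of y] that by (cases i) auto
  qed
  let ?U = "\<chi> p q. \<beta> (fst q) (fst p) * w (fst q) (snd q) (snd p)"
  have gram: "(\<Sum>u\<in>UNIV. cnj (?U$u$p) * ?U$u$q) = (\<Sum>g\<in>UNIV. cnj (\<beta> (fst p) g) * \<beta> (fst q) g)
      * (\<Sum>k\<in>UNIV. cnj (w (fst p) (snd p) k) * w (fst q) (snd q) k)" for p q
    by (simp add: sum_UNIV_times_mult[symmetric] mult_ac)
  show "(\<Sum>u\<in>UNIV. cnj (?U$u$p) * ?U$u$q) = 0" if "p \<noteq> q" for p q
    unfolding gram using that inj orth'[of "snd p" "snd q" "fst p"]
    by (cases "fst p = fst q") (auto simp: character_orthogonality[OF chars chars] prod_eq_iff)
  show "(\<Sum>u\<in>UNIV. cnj (?U$u$p) * ?U$u$p) \<noteq> 0" for p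
    unfolding gram using nonzero by (simp add: character_orthogonality[OF chars chars])
qed

text \<open>The eigenvectors are \<open>\<beta> y \<otimes> w y i\<close>, one orthogonal pair \<open>w y False, w y True\<close> of
  eigenvectors of the \<open>2 \<times> 2\<close> block of each character \<open>\<beta> y\<close>.\<close>

lemma semi_cayley_eigenvalues:
  fixes R S T :: "'g::{ab_group_add,finite} set"
  assumes R: "uminus ` R = R" and S: "uminus ` S = S"
  obtains \<beta> :: "'g \<Rightarrow> 'g \<Rightarrow> complex" and d :: "'g \<Rightarrow> bool \<Rightarrow> real"
  where "bij_betw \<beta> UNIV {f. character f}"
    and "eigenvalues_mset (semi_cayley_adj_matrix R S T) = image_mset (\<lambda>(y, i). d y i) (mset_set UNIV)"
    and "\<And>y. d y False + d y True = Re (\<Sum>x\<in>R. \<beta> y x) + Re (\<Sum>x\<in>S. \<beta> y x)"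
    and "\<And>y. d y False * d y True
      = Re (\<Sum>x\<in>R. \<beta> y x) * Re (\<Sum>x\<in>S. \<beta> y x) - (cmod (\<Sum>x\<in>T. \<beta> y x))\<^sup>2"
proof -
  obtain \<beta> :: "'g \<Rightarrow> 'g \<Rightarrow> complex" where \<beta>: "bij_betw \<beta> UNIV {f. character f}"
    by (rule obtain_character_enumeration)
  have chars: "character (\<beta> y)" for y
    using \<beta> by (auto simp: bij_betw_def)
  define r where "r y = Re (\<Sum>x\<in>R. \<beta> y x)" for y
  define s where "s y = Re (\<Sum>x\<in>S. \<beta> y x)" for y
  define t where "t y = (\<Sum>x\<in>T. \<beta> y x)" for y
  obtain d w where dw: "\<And>y. block_eigendata (r y) (s y) (t y) (d y) (w y)"
    using obtain_block_eigendata_family[of r s t] by metis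
  from dw have eigen: "\<And>y i k. block_apply (r y) (s y) (t y) (w y i) k = of_real (d y i) * w y i k"
    and nonzero: "\<And>y i. (\<Sum>k\<in>UNIV. cnj (w y i k) * w y i k) \<noteq> 0"
    and orth: "\<And>y. (\<Sum>k\<in>UNIV. cnj (w y False k) * w y True k) = 0"
    and sum: "\<And>y. d y False + d y True = r y + s y"
    and prod: "\<And>y. d y False * d y True = r y * s y - (cmod (t y))\<^sup>2"
    by (simp_all add: block_eigendata_def)
  define U :: "complex^('g \<times> bool)^('g \<times> bool)" where
    "U = (\<chi> p q. \<beta> (fst q) (fst p) * w (fst q) (snd q) (snd p))"
  have "det U \<noteq> 0"
    unfolding U_def using \<beta> nonzero orth by (rule det_character_tensor_nonzero)
  moreover have "(\<Sum>u\<in>UNIV. of_real (semi_cayley_adj_matrix R S T $ p $ u) * U$u$q)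
      = of_real (d (fst q) (snd q)) * U$p$q" for p q
    using semi_cayley_adj_matrix_mult_character[OF chars[of "fst q"] R S,
        where h = "fst p" and k = "snd p" and T = T and z = "w (fst q) (snd q)"]
    unfolding r_def[symmetric] s_def[symmetric] t_def[symmetric]
    by (simp add: U_def eigen mult_ac)
  ultimately have "char_poly_mat (semi_cayley_adj_matrix R S T) = (\<Prod>q\<in>UNIV. [:- d (fst q) (snd q), 1:])"
    by (rule char_poly_mat_eq_prod_if_eigenbasis)
  then have "eigenvalues_mset (semi_cayley_adj_matrix R S T) = (\<Sum>q\<in>UNIV. {#d (fst q) (snd q)#})"
    by (simp add: eigenvalues_mset_def proots_prod)
  also have "\<dots> = image_mset (\<lambda>(y, i). d y i) (mset_set UNIV)"
    by (simp add: sum_unfold_sum_mset case_prod_unfold)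
  finally show thesis
    using that \<beta> sum prod by (simp add: r_def s_def t_def)
qed

section \<open>Character sums and the blocks\<close>


lemma Re_sum_character_le_card:
  fixes \<psi> :: "'g::{ab_group_add,finite} \<Rightarrow> complex"
  assumes "character \<psi>"
  shows "Re (\<Sum>x\<in>X. \<psi> x) \<le> card X"
proof -
  have "Re (\<Sum>x\<in>X. \<psi> x) \<le> (\<Sum>x\<in>X. 1)"
    unfolding Re_sum
    by (rule sum_mono) (use complex_Re_le_cmod norm_character[OF assms] in metis)
  then show ?thesis
    by simp
qed

lemma Re_sum_nontrivial_character_le_card_compl:
  fixes \<psi> :: "'g::{ab_group_add,finite} \<Rightarrow> complex"
  assumes \<psi>: "character \<psi>" "\<psi> \<noteq> (\<lambda>_. 1)"
  shows "Re (\<Sum>x\<in>X. \<psi> x) \<le> real CARD('g) - card X"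
proof -
  have "(\<Sum>x\<in>X. \<psi> x) + (\<Sum>x\<in>UNIV - X. \<psi> x) = 0"
    using sum_nontrivial_character[OF \<psi>] by (metis finite sum.subset_diff top_greatest add.commute)
  then have "Re (\<Sum>x\<in>X. \<psi> x) = (\<Sum>x\<in>UNIV - X. - Re (\<psi> x))"
    by (simp add: eq_neg_iff_add_eq_0[symmetric] Re_sum sum_negf)
  also have "\<dots> \<le> (\<Sum>x\<in>UNIV - X. 1)"
  proof (rule sum_mono)
    show "- Re (\<psi> x) \<le> 1" for x
      using abs_Re_le_cmod[of "\<psi> x"] norm_character[OF \<psi>(1), of x] by simp
  qed
  also have "\<dots> = real CARD('g) - card X"
    by (simp add: card_Diff_subset of_nat_diff card_mono)
  finally show ?thesis .
qed

lemma Re_sum_nontrivial_character_le_half: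
  fixes \<psi> :: "'g::{ab_group_add,finite} \<Rightarrow> complex"
  assumes "character \<psi>" "\<psi> \<noteq> (\<lambda>_. 1)"
  shows "Re (\<Sum>x\<in>X. \<psi> x) \<le> real CARD('g) / 2"
  using Re_sum_character_le_card[OF assms(1), of X]
    Re_sum_nontrivial_character_le_card_compl[OF assms, of X] by linarith

lemma norm_sum_character_le_card:
  fixes \<psi> :: "'g::{ab_group_add,finite} \<Rightarrow> complex"
  assumes "character \<psi>"
  shows "cmod (\<Sum>x\<in>X. \<psi> x) \<le> card X"
  using norm_sum[of \<psi> X] norm_character[OF assms] by simp

lemma block_eigenvalue_eq:
  fixes r s T d0 d1 :: real
  assumes "d0 + d1 = r + s" "d0 * d1 = r * s - T\<^sup>2"
  shows "(d0 - r) * (d0 - s) = T\<^sup>2" "(d1 - r) * (d1 - s) = T\<^sup>2"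
proof -
  have d1: "d1 = r + s - d0" and d0: "d0 = r + s - d1"
    using assms(1) by simp_all
  show "(d0 - r) * (d0 - s) = T\<^sup>2"
    using assms(2) unfolding d1 by (simp add: algebra_simps power2_eq_square)
  show "(d1 - r) * (d1 - s) = T\<^sup>2"
    using assms(2) unfolding d0 by (simp add: algebra_simps power2_eq_square)
qed

lemma block_eigenvalues_gt:
  fixes r s T d0 d1 c :: real
  assumes "d0 + d1 = r + s" "d0 * d1 = r * s - T\<^sup>2" "c < d0" "c < d1"
  shows "c < r" "c < s" "T\<^sup>2 < (r - c) * (s - c)"
proof -
  have "(r - c) * (s - c) - T\<^sup>2 = (r * s - T\<^sup>2) - c * (r + s) + c\<^sup>2"
    by (simp add: algebra_simps power2_eq_square)
  also have "\<dots> = (d0 - c) * (d1 - c)"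
    unfolding assms(1,2)[symmetric] by (simp add: algebra_simps power2_eq_square)
  finally have "(r - c) * (s - c) - T\<^sup>2 = (d0 - c) * (d1 - c)" .
  moreover have "0 < (d0 - c) * (d1 - c)"
    using assms(3,4) by simp
  ultimately show T: "T\<^sup>2 < (r - c) * (s - c)"
    by simp
  have "0 < (r - c) + (s - c)" "0 < (r - c) * (s - c)"
    using assms T zero_le_power2[of T] by linarith+
  then show "c < r" "c < s"
    by (auto simp: zero_less_mult_iff)
qed

lemma nontrivial_character_block_not_both_large:
  fixes \<psi> :: "'g::{ab_group_add,finite} \<Rightarrow> complex"
  assumes \<psi>: "character \<psi>" "\<psi> \<noteq> (\<lambda>_. 1)"
    and d: "d0 + d1 = Re (\<Sum>x\<in>R. \<psi> x) + Re (\<Sum>x\<in>S. \<psi> x)"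
      "d0 * d1 = Re (\<Sum>x\<in>R. \<psi> x) * Re (\<Sum>x\<in>S. \<psi> x) - T\<^sup>2"
  shows "\<not> (2 * real CARD('g) / 3 < d0 \<and> 2 * real CARD('g) / 3 < d1)"
  using block_eigenvalues_gt(1)[OF d, of "2 * real CARD('g) / 3"]
    Re_sum_nontrivial_character_le_half[OF \<psi>, of R] of_nat_0_le_iff[of "CARD('g)"] by linarith

text \<open>If both eigenvalues of the block \<open>[[|R|, |T|], [|T|, |S|]]\<close> of the trivial character
  exceed \<open>2n/3\<close>, then \<open>|R|\<close>, \<open>|S|\<close> exceed \<open>2n/3\<close> and \<open>|T|\<close> is small, which leaves every
  other character with small sums over \<open>R\<close>, \<open>S\<close> and \<open>T\<close>.\<close>

lemma trivial_block_large_excludes_large_eigenvalue: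
  fixes \<psi> :: "'g::{ab_group_add,finite} \<Rightarrow> complex"
  assumes \<psi>: "character \<psi>" "\<psi> \<noteq> (\<lambda>_. 1)"
    and a: "a0 + a1 = real (card R) + real (card S)"
      "a0 * a1 = real (card R) * real (card S) - (real (card T))\<^sup>2"
      "2 * real CARD('g) / 3 < a0" "2 * real CARD('g) / 3 < a1"
    and d: "(d - Re (\<Sum>x\<in>R. \<psi> x)) * (d - Re (\<Sum>x\<in>S. \<psi> x)) = (cmod (\<Sum>x\<in>T. \<psi> x))\<^sup>2"
  shows "d \<le> 2 * real CARD('g) / 3"
proof (rule ccontr)
  define n where "n = real CARD('g)"
  assume "\<not> d \<le> 2 * real CARD('g) / 3"
  then have d_gt: "2 * n / 3 < d"
    by (simp add: n_def)
  have RS: "2 * n / 3 < card R" "2 * n / 3 < card S"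
    "(real (card T))\<^sup>2 < (card R - 2 * n / 3) * (card S - 2 * n / 3)"
    using block_eigenvalues_gt[OF a] by (simp_all add: n_def)
  have "card R \<le> n" "card S \<le> n"
    by (simp_all add: n_def card_mono)
  have "n / 3 < d - Re (\<Sum>x\<in>R. \<psi> x)" "n / 3 < d - Re (\<Sum>x\<in>S. \<psi> x)"
    using Re_sum_nontrivial_character_le_card_compl[OF \<psi>, of R]
      Re_sum_nontrivial_character_le_card_compl[OF \<psi>, of S] RS d_gt by (simp_all add: n_def)
  then have "(n / 3) * (n / 3) < (cmod (\<Sum>x\<in>T. \<psi> x))\<^sup>2"
    unfolding d[symmetric] by (intro mult_strict_mono) (auto simp: n_def)
  moreover have "(card R - 2 * n / 3) * (card S - 2 * n / 3) \<le> (n / 3) * (n / 3)"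
    using RS \<open>card R \<le> n\<close> \<open>card S \<le> n\<close> by (intro mult_mono) auto
  moreover have "(cmod (\<Sum>x\<in>T. \<psi> x))\<^sup>2 \<le> (real (card T))\<^sup>2"
    using norm_sum_character_le_card[OF \<psi>(1)] by (intro power_mono) auto
  ultimately show False
    using RS(3) by linarith
qed

section \<open>Non-real characters\<close>


definition pos_part :: "real \<Rightarrow> real" where
  "pos_part y = max y 0"

lemma pos_part_ge: "y \<le> pos_part y" "0 \<le> pos_part y"
  by (auto simp: pos_part_def)

lemma pos_part_add_neg: "pos_part a + pos_part (- a) = \<bar>a\<bar>"
  by (simp add: pos_part_def max_def)

text \<open>\<open>pos_mass \<psi> w\<close> is the largest value of \<open>Re (w \<cdot> \<Sum>\<^sub>x\<^sub>\<in>\<^sub>X \<psi> x)\<close> over all sets \<open>X\<close>.\<close>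

definition pos_mass :: "('g::finite \<Rightarrow> complex) \<Rightarrow> complex \<Rightarrow> real" where
  "pos_mass \<psi> w = (\<Sum>x\<in>UNIV. pos_part (Re (w * \<psi> x)))"

lemma Re_mult_sum_le_pos_mass: "Re (w * (\<Sum>x\<in>X. \<psi> x)) \<le> pos_mass \<psi> w"
proof -
  have "Re (w * (\<Sum>x\<in>X. \<psi> x)) \<le> (\<Sum>x\<in>X. pos_part (Re (w * \<psi> x)))"
    unfolding sum_distrib_left Re_sum by (rule sum_mono) (rule pos_part_ge)
  also have "\<dots> \<le> pos_mass \<psi> w"
    unfolding pos_mass_def by (rule sum_mono2) (auto simp: pos_part_ge)
  finally show ?thesis .
qed

lemma sum_character_shift:
  fixes \<psi> :: "'g::{ab_group_add,finite} \<Rightarrow> complex" and F :: "complex \<Rightarrow> 'a::comm_monoid_add"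
  assumes "character \<psi>"
  shows "(\<Sum>x\<in>UNIV. F (\<psi> x)) = (\<Sum>x\<in>UNIV. F (\<psi> g * \<psi> x))"
proof -
  have "(\<Sum>x\<in>UNIV. F (\<psi> x)) = (\<Sum>x\<in>UNIV. F (\<psi> (g + x)))"
    by (rule sum.reindex_bij_witness[of _ "\<lambda>x. g + x" "\<lambda>x. x - g"]) auto
  then show ?thesis
    by (simp add: character_add[OF assms])
qed

lemma sum_power_character_eq_0:
  fixes \<psi> :: "'g::{ab_group_add,finite} \<Rightarrow> complex"
  assumes "character \<psi>" and "\<psi> g ^ j \<noteq> 1"
  shows "(\<Sum>x\<in>UNIV. (w * \<psi> x) ^ j) = 0"
  using sum_character_eq_0[OF character_power[OF assms(1)] assms(2)]
  by (simp add: power_mult_distrib sum_distrib_left[symmetric])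

lemma norm_mult_character:
  fixes \<psi> :: "'g::{ab_group_add,finite} \<Rightarrow> complex"
  shows "cmod w = 1 \<Longrightarrow> character \<psi> \<Longrightarrow> cmod (w * \<psi> x) = 1"
  by (simp add: norm_mult norm_character)

lemma of_real_Re_powers:
  fixes v :: complex
  assumes "cmod v = 1"
  shows "complex_of_real ((2 * Re v)^2) = v^2 + 2 + cnj v^2"
    and "complex_of_real ((2 * Re v)^4) = v^4 + 4 * v^2 + 6 + 4 * cnj v^2 + cnj v^4"
    and "complex_of_real ((2 * Re v)^6)
      = v^6 + 6 * v^4 + 15 * v^2 + 20 + 15 * cnj v^2 + 6 * cnj v^4 + cnj v^6"
proof -
  have unit: "cnj v * v = 1"
    using assms by (rule unit_cnj_mult)
  have "complex_of_real (2 * Re v) = v + cnj v"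
    by (simp add: complex_add_cnj)
  then show "complex_of_real ((2 * Re v)^2) = v^2 + 2 + cnj v^2"
    and "complex_of_real ((2 * Re v)^4) = v^4 + 4 * v^2 + 6 + 4 * cnj v^2 + cnj v^4"
    and "complex_of_real ((2 * Re v)^6)
      = v^6 + 6 * v^4 + 15 * v^2 + 20 + 15 * cnj v^2 + 6 * cnj v^4 + cnj v^6"
    unfolding of_real_power using unit by algebra+
qed

lemma sum_cnj_power_eq_0: "(\<Sum>x\<in>A. v x ^ j) = 0 \<Longrightarrow> (\<Sum>x\<in>A. cnj (v x) ^ j) = 0"
  using cnj_sum[of "\<lambda>x. v x ^ j" A] by simp

lemma sum_Re_power2:
  fixes v :: "'a::finite \<Rightarrow> complex"
  assumes unit: "\<And>x. cmod (v x) = 1" and s2: "(\<Sum>x\<in>UNIV. v x ^ 2) = 0"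
  shows "(\<Sum>x\<in>UNIV. Re (v x) ^ 2) = real CARD('a) / 2"
proof -
  have "complex_of_real (\<Sum>x\<in>UNIV. (2 * Re (v x))^2) = (\<Sum>x\<in>UNIV. v x^2 + 2 + cnj (v x)^2)"
    unfolding of_real_sum using of_real_Re_powers(1)[OF unit] by simp
  also have "\<dots> = complex_of_real (2 * real CARD('a))"
    using s2 sum_cnj_power_eq_0[OF s2] by (simp add: sum.distrib)
  finally show ?thesis
    unfolding of_real_eq_iff by (simp add: power_mult_distrib sum_distrib_left[symmetric])
qed

lemma sum_Re_power4:
  fixes v :: "'a::finite \<Rightarrow> complex"
  assumes unit: "\<And>x. cmod (v x) = 1"
    and s2: "(\<Sum>x\<in>UNIV. v x ^ 2) = 0" and s4: "(\<Sum>x\<in>UNIV. v x ^ 4) = 0"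
  shows "(\<Sum>x\<in>UNIV. Re (v x) ^ 4) = 3 * real CARD('a) / 8"
proof -
  have "complex_of_real (\<Sum>x\<in>UNIV. (2 * Re (v x))^4)
      = (\<Sum>x\<in>UNIV. v x^4 + 4 * v x^2 + 6 + 4 * cnj (v x)^2 + cnj (v x)^4)"
    unfolding of_real_sum using of_real_Re_powers(2)[OF unit] by simp
  also have "\<dots> = complex_of_real (6 * real CARD('a))"
    using s2 s4 sum_cnj_power_eq_0[OF s2] sum_cnj_power_eq_0[OF s4]
    by (simp add: sum.distrib sum_distrib_left[symmetric])
  finally show ?thesis
    unfolding of_real_eq_iff by (simp add: power_mult_distrib sum_distrib_left[symmetric])
qed

lemma sum_Re_power6:
  fixes v :: "'a::finite \<Rightarrow> complex"
  assumes unit: "\<And>x. cmod (v x) = 1" and s2: "(\<Sum>x\<in>UNIV. v x ^ 2) = 0"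
    and s4: "(\<Sum>x\<in>UNIV. v x ^ 4) = 0" and s6: "(\<Sum>x\<in>UNIV. v x ^ 6) = 0"
  shows "(\<Sum>x\<in>UNIV. Re (v x) ^ 6) = 5 * real CARD('a) / 16"
proof -
  have "complex_of_real (\<Sum>x\<in>UNIV. (2 * Re (v x))^6)
      = (\<Sum>x\<in>UNIV. v x^6 + 6 * v x^4 + 15 * v x^2 + 20 + 15 * cnj (v x)^2 + 6 * cnj (v x)^4
          + cnj (v x)^6)"
    unfolding of_real_sum using of_real_Re_powers(3)[OF unit] by simp
  also have "\<dots> = complex_of_real (20 * real CARD('a))"
    using s2 s4 s6 sum_cnj_power_eq_0[OF s2] sum_cnj_power_eq_0[OF s4] sum_cnj_power_eq_0[OF s6]
    by (simp add: sum.distrib sum_distrib_left[symmetric])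
  finally show ?thesis
    unfolding of_real_eq_iff by (simp add: power_mult_distrib sum_distrib_left[symmetric])
qed

text \<open>The polynomial dominates \<open>pos_part\<close> and touches it at \<open>|y| = 1/2\<close> and \<open>|y| = 1\<close>; once
  the first six moments of \<open>Re (w \<psi> x)\<close> are known, it yields the bound \<open>71/216 < 1/3\<close>.\<close>

lemma pos_part_le_poly6: "pos_part y \<le> y / 2 + 11/108 + 25/36 * y^2 - 4/9 * y^4 + 4/27 * y^6"
proof -
  define a where "a = \<bar>y\<bar>"
  have "11/108 + 25/36 * a^2 - 4/9 * a^4 + 4/27 * a^6 - a / 2
      = (a - 1/2)^2 * (a - 1)^2 * (11/27 + 4/9 * a + 4/27 * a^2)"
    by algebra
  moreover have "0 \<le> (a - 1/2)^2 * (a - 1)^2 * (11/27 + 4/9 * a + 4/27 * a^2)"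
    by (simp add: a_def)
  moreover have "y^2 = a^2" "y^4 = a^4" "y^6 = a^6" "pos_part y = y / 2 + a / 2"
    by (simp_all add: a_def power_even_abs_numeral pos_part_def max_def abs_if)
  ultimately show ?thesis
    by linarith
qed

lemma pos_part_le_poly4:
  assumes "\<bar>y\<bar> \<le> 1"
  shows "pos_part y \<le> y / 2 + 43/384 + 29/48 * y^2 - 5/24 * y^4"
proof -
  define a where "a = \<bar>y\<bar>"
  have "43/384 + 29/48 * a^2 - 5/24 * a^4 - a / 2 = (a - 1/2)^2 * (43/96 - 5/24 * a - 5/24 * a^2)"
    by algebra
  moreover have "a^2 \<le> 1" "0 \<le> a"
    using assms by (simp_all add: a_def abs_square_le_1)
  then have "0 \<le> (a - 1/2)^2 * (43/96 - 5/24 * a - 5/24 * a^2)"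
    using assms by (intro mult_nonneg_nonneg) (auto simp: a_def)
  moreover have "y^2 = a^2" "y^4 = a^4" "pos_part y = y / 2 + a / 2"
    by (simp_all add: a_def power_even_abs_numeral pos_part_def max_def abs_if)
  ultimately show ?thesis
    by linarith
qed

lemma pos_mass_le_of_order_gt_6:
  fixes \<psi> :: "'g::{ab_group_add,finite} \<Rightarrow> complex"
  assumes \<psi>: "character \<psi>" and order: "\<And>j. j \<in> {1..6} \<Longrightarrow> \<psi> g ^ j \<noteq> 1" and w: "cmod w = 1"
  shows "pos_mass \<psi> w \<le> 71/216 * real CARD('g)"
proof -
  define v where "v x = w * \<psi> x" for x
  have unit: "cmod (v x) = 1" for x
    unfolding v_def using w \<psi> by (rule norm_mult_character)
  have s: "(\<Sum>x\<in>UNIV. v x ^ j) = 0" if "j \<in> {1..6}" for j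
    unfolding v_def by (rule sum_power_character_eq_0[OF \<psi> order[OF that]])
  have s1: "(\<Sum>x\<in>UNIV. Re (v x)) = 0"
    using s[of 1] by (simp add: Re_sum[symmetric])
  have "pos_mass \<psi> w \<le> (\<Sum>x\<in>UNIV. Re (v x) / 2 + 11/108 + 25/36 * Re (v x)^2 - 4/9 * Re (v x)^4
      + 4/27 * Re (v x)^6)"
    unfolding pos_mass_def v_def[symmetric] by (rule sum_mono) (rule pos_part_le_poly6)
  also have "\<dots> = (\<Sum>x\<in>UNIV. Re (v x)) / 2 + 11/108 * real CARD('g) + 25/36 * (\<Sum>x\<in>UNIV. Re (v x)^2)
      - 4/9 * (\<Sum>x\<in>UNIV. Re (v x)^4) + 4/27 * (\<Sum>x\<in>UNIV. Re (v x)^6)"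
    by (simp add: sum.distrib sum_subtractf sum_distrib_left sum_divide_distrib)
  also have "\<dots> = 71/216 * real CARD('g)"
    using s1 sum_Re_power2[of v, OF unit s] sum_Re_power4[of v, OF unit s s]
      sum_Re_power6[of v, OF unit s s s] by simp
  finally show ?thesis .
qed

text \<open>The three values \<open>w \<psi> x\<close>, \<open>\<zeta> w \<psi> x\<close>, \<open>\<zeta>\<^sup>2 w \<psi> x\<close> have real parts summing to zero, so their
  positive parts add up to at most \<open>1\<close>.\<close>

lemma pos_mass_le_of_order_3:
  fixes \<psi> :: "'g::{ab_group_add,finite} \<Rightarrow> complex"
  assumes \<psi>: "character \<psi>" and "\<psi> g ^ 3 = 1" "\<psi> g \<noteq> 1" and w: "cmod w = 1"
  shows "pos_mass \<psi> w \<le> real CARD('g) / 3"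
proof -
  define \<zeta> where "\<zeta> = \<psi> g"
  have "(\<zeta> - 1) * (1 + \<zeta> + \<zeta>^2) = 0"
    using assms(2) unfolding \<zeta>_def by algebra
  then have zeta: "1 + \<zeta> + \<zeta>^2 = 0"
    using assms(3) by (simp add: \<zeta>_def)
  define F where "F u = pos_part (Re (w * u))" for u
  have "pos_mass \<psi> w = (\<Sum>x\<in>UNIV. F (\<zeta> * \<psi> x))" "pos_mass \<psi> w = (\<Sum>x\<in>UNIV. F (\<zeta> * (\<zeta> * \<psi> x)))"
    unfolding pos_mass_def F_def \<zeta>_def
    using sum_character_shift[OF \<psi>, of "\<lambda>u. pos_part (Re (w * u))" g]
      sum_character_shift[OF \<psi>, of "\<lambda>u. pos_part (Re (w * (\<psi> g * u)))" g] by simp_all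
  then have "3 * pos_mass \<psi> w = (\<Sum>x\<in>UNIV. F (\<psi> x) + F (\<zeta> * \<psi> x) + F (\<zeta> * (\<zeta> * \<psi> x)))"
    by (simp add: sum.distrib pos_mass_def F_def)
  also have "\<dots> \<le> (\<Sum>x\<in>(UNIV :: 'g set). 1)"
  proof (rule sum_mono)
    fix x
    have "Re (w * \<psi> x) + Re (w * (\<zeta> * \<psi> x)) + Re (w * (\<zeta> * (\<zeta> * \<psi> x)))
        = Re (w * \<psi> x * (1 + \<zeta> + \<zeta>^2))"
      by (simp add: algebra_simps power2_eq_square)
    moreover have "cmod (w * \<psi> x) = 1" "cmod \<zeta> = 1"
      using norm_mult_character[OF w \<psi>] norm_character[OF \<psi>] by (simp_all add: \<zeta>_def)
    then have "\<bar>Re (w * \<psi> x)\<bar> \<le> 1" "\<bar>Re (w * (\<zeta> * \<psi> x))\<bar> \<le> 1" "\<bar>Re (w * (\<zeta> * (\<zeta> * \<psi> x)))\<bar> \<le> 1"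
      using abs_Re_le_cmod by (metis mult.left_commute norm_mult mult_1)+
    ultimately show "F (\<psi> x) + F (\<zeta> * \<psi> x) + F (\<zeta> * (\<zeta> * \<psi> x)) \<le> 1"
      using zeta unfolding F_def pos_part_def by (simp add: max_def) linarith
  qed
  finally show ?thesis
    by simp
qed

lemma pos_part_Re_root_of_unity_4:
  fixes z :: complex
  assumes "z ^ 4 = 1"
  shows "pos_part (Re z) = (1 + 2 * Re z + Re (z^2)) / 4"
proof -
  have "(z - 1) * (z + 1) * (z^2 + 1) = 0"
    using assms by algebra
  then consider "z - 1 = 0" | "z + 1 = 0" | "z^2 + 1 = 0"
    by auto
  then show ?thesis
  proof cases
    case 2
    then have "z = -1"
      by (simp add: eq_neg_iff_add_eq_0)
    then show ?thesis
      by (simp add: pos_part_def)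
  next
    case 3
    then have "Re (z^2) = -1" "Im (z^2) = 0"
      by (simp_all add: eq_neg_iff_add_eq_0[symmetric])
    have "Re z = 0"
    proof (rule ccontr)
      assume "Re z \<noteq> 0"
      then have "Re z * Re z = -1"
        using \<open>Re (z^2) = -1\<close> \<open>Im (z^2) = 0\<close> by (simp add: power2_eq_square)
      then show False
        using zero_le_square[of "Re z"] by linarith
    qed
    then show ?thesis
      using \<open>Re (z^2) = -1\<close> by (simp add: pos_part_def)
  qed (simp add: pos_part_def)
qed

lemma norm_add_Re_Im_le: "cmod v = 1 \<Longrightarrow> \<bar>Re v\<bar> + \<bar>Im v\<bar> \<le> 3/2"
proof -
  assume "cmod v = 1"
  then have "(Re v)\<^sup>2 + (Im v)\<^sup>2 = 1"
    by (simp add: cmod_def)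
  then have "(\<bar>Re v\<bar> + \<bar>Im v\<bar>)\<^sup>2 < (3/2)\<^sup>2"
    using sum_squares_ge_zero[of "\<bar>Re v\<bar> - \<bar>Im v\<bar>" 0] by (simp add: power2_eq_square algebra_simps)
  then show ?thesis
    by (rule power2_less_imp_less[THEN less_imp_le]) simp
qed

lemma pos_mass_1_of_exponent_4:
  fixes \<psi> :: "'g::{ab_group_add,finite} \<Rightarrow> complex"
  assumes \<psi>: "character \<psi>" and exp4: "\<And>x. \<psi> x ^ 4 = 1" and g: "\<psi> g ^ 2 \<noteq> 1"
  shows "pos_mass \<psi> 1 = real CARD('g) / 4"
proof -
  have "\<psi> g ^ 1 \<noteq> 1"
    using g by auto
  then have "(\<Sum>x\<in>UNIV. (1 * \<psi> x) ^ 1) = 0" "(\<Sum>x\<in>UNIV. (1 * \<psi> x) ^ 2) = 0"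
    using sum_power_character_eq_0[OF \<psi>] g by blast+
  then have "(\<Sum>x\<in>UNIV. Re (\<psi> x)) = 0" "(\<Sum>x\<in>UNIV. Re (\<psi> x ^ 2)) = 0"
    by (simp_all add: Re_sum[symmetric])
  moreover have "pos_mass \<psi> 1 = (\<Sum>x\<in>UNIV. (1 + 2 * Re (\<psi> x) + Re (\<psi> x ^ 2)) / 4)"
    unfolding pos_mass_def by (simp add: pos_part_Re_root_of_unity_4[OF exp4])
  ultimately show ?thesis
    by (simp add: sum.distrib sum_divide_distrib[symmetric] sum_distrib_left[symmetric])
qed

text \<open>Multiplication by \<open>\<psi> g = \<plusminus>\<i>\<close> permutes the values of \<psi> and turns real parts into
  imaginary parts, so \<open>4 pos_mass \<psi> w = \<Sum>\<^sub>x |Re (w \<psi> x)| + |Im (w \<psi> x)|\<close>.\<close>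

lemma pos_mass_le_of_exponent_4:
  fixes \<psi> :: "'g::{ab_group_add,finite} \<Rightarrow> complex"
  assumes \<psi>: "character \<psi>" and exp4: "\<And>x. \<psi> x ^ 4 = 1" and g: "\<psi> g ^ 2 \<noteq> 1"
    and w: "cmod w = 1"
  shows "pos_mass \<psi> w \<le> 3 * real CARD('g) / 8"
proof -
  define \<zeta> where "\<zeta> = \<psi> g"
  have "(\<zeta>^2 - 1) * (\<zeta> - \<i>) * (\<zeta> + \<i>) = \<zeta>^4 - 1"
    by (simp add: algebra_simps power2_eq_square power4_eq_xxxx)
  then have "(\<zeta>^2 - 1) * (\<zeta> - \<i>) * (\<zeta> + \<i>) = 0"
    using exp4[of g] by (simp add: \<zeta>_def)
  then have zeta: "\<zeta> = \<i> \<or> \<zeta> = - \<i>"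
    using g by (auto simp: \<zeta>_def eq_neg_iff_add_eq_0[symmetric])
  then have zeta2: "\<zeta> * \<zeta> = -1"
    by auto
  define F where "F u = pos_part (Re (w * u))" for u
  have shift: "(\<Sum>x\<in>UNIV. G (\<psi> x)) = (\<Sum>x\<in>UNIV. G (\<zeta> * \<psi> x))" for G :: "complex \<Rightarrow> real"
    unfolding \<zeta>_def by (rule sum_character_shift[OF \<psi>])
  have "pos_mass \<psi> w = (\<Sum>x\<in>UNIV. F (- \<psi> x))"
    using shift[of F] shift[of "\<lambda>u. F (\<zeta> * u)"] zeta2
    by (simp add: pos_mass_def F_def mult.assoc[symmetric])
  moreover have "(\<Sum>x\<in>UNIV. F (- \<psi> x)) = (\<Sum>x\<in>UNIV. F (- (\<zeta> * \<psi> x)))"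
    by (rule shift[of "\<lambda>u. F (- u)"])
  moreover have "pos_mass \<psi> w = (\<Sum>x\<in>UNIV. F (\<zeta> * \<psi> x))"
    using shift[of F] by (simp add: pos_mass_def F_def)
  ultimately have "4 * pos_mass \<psi> w
      = (\<Sum>x\<in>UNIV. (F (\<psi> x) + F (- \<psi> x)) + (F (\<zeta> * \<psi> x) + F (- (\<zeta> * \<psi> x))))"
    by (simp add: sum.distrib pos_mass_def F_def)
  also have "\<dots> = (\<Sum>x\<in>UNIV. \<bar>Re (w * \<psi> x)\<bar> + \<bar>Im (w * \<psi> x)\<bar>)"
    using zeta by (intro sum.cong refl) (auto simp: F_def pos_part_add_neg[symmetric] algebra_simps)
  also have "\<dots> \<le> (\<Sum>x\<in>(UNIV :: 'g set). 3/2)"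
    by (intro sum_mono norm_add_Re_Im_le norm_mult_character[OF w \<psi>])
  finally show ?thesis
    by simp
qed

lemma pos_part_le_of_quadratic:
  fixes y :: real
  assumes f: "4 * y^2 + 2 * y - 1 = 0"
  shows "pos_part y \<le> 227/1000 + 7/25 * y"
proof -
  have "y \<le> 227/720"
  proof (rule ccontr)
    assume "\<not> y \<le> 227/720"
    then have "(227/720) * (227/720) < y * y"
      by (intro mult_strict_mono) auto
    with f \<open>\<not> y \<le> 227/720\<close> show False
      by (simp add: power2_eq_square)
  qed
  moreover have "-227/280 \<le> y"
  proof (rule ccontr)
    assume "\<not> -227/280 \<le> y"
    then have "0 < (y + 227/280) * (4 * y - 227/70 + 2)"
      by (intro mult_neg_neg) auto
    with f show False
      by (simp add: power2_eq_square algebra_simps)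
  qed
  ultimately show ?thesis
    by (auto simp: pos_part_def)
qed

text \<open>For \<open>z\<^sup>5 = 1\<close>, \<open>z \<noteq> 1\<close> the real part \<open>y\<close> solves \<open>4 y\<^sup>2 + 2 y = 1\<close>, where the right-hand side
  reduces to the line of \<open>pos_part_le_of_quadratic\<close>; averaging over a nontrivial character
  kills the \<open>Re z\<close> and \<open>Re (z\<^sup>2)\<close> terms.\<close>

lemma pos_part_Re_root_of_unity_5:
  fixes z :: complex
  assumes z: "z ^ 5 = 1"
  shows "pos_part (Re z) \<le> 407/1250 + 1193/2500 * Re z + 493/2500 * Re (z^2)"
proof (cases "z = 1")
  case False
  define y where "y = Re z"
  have "cmod z ^ 5 = 1 ^ 5"
    using z by (simp flip: norm_power)
  then have "cmod z = 1"
    by (rule power_eq_imp_eq_base) auto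
  then have cz: "cnj z * z = 1" and re_im: "(Re z)^2 + (Im z)^2 = 1"
    by (simp_all add: unit_cnj_mult cmod_def)
  have "(z - 1) * (z^4 + z^3 + z^2 + z + 1) = 0"
    using z by algebra
  then have "z^4 + z^3 + z^2 + z + 1 = 0"
    using False by simp
  moreover have "z^2 + z + 1 + cnj z + cnj z^2 = cnj z^2 * (z^4 + z^3 + z^2 + z + 1)"
    using cz by algebra
  ultimately have "Re (z^2 + z + 1 + cnj z + cnj z^2) = 0"
    by simp
  then have "2 * Re (z^2) + 2 * y + 1 = 0"
    by (simp add: y_def power2_eq_square)
  moreover have r2: "Re (z^2) = 2 * y^2 - 1"
    using re_im by (simp add: y_def power2_eq_square algebra_simps)
  ultimately have f: "4 * y^2 + 2 * y - 1 = 0"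
    by simp
  then have "pos_part y \<le> 227/1000 + 7/25 * y"
    by (rule pos_part_le_of_quadratic)
  moreover have "407/1250 + 1193/2500 * Re z + 493/2500 * Re (z^2) = 227/1000 + 7/25 * y"
    using r2 f unfolding y_def[symmetric] by (simp add: algebra_simps)
  ultimately show ?thesis
    by (simp add: y_def)
qed (simp add: pos_part_def)

lemma root_of_unity_5_power_eq_1:
  fixes \<zeta> :: complex
  assumes \<zeta>: "\<zeta> ^ 5 = 1" "\<zeta> \<noteq> 1" and j: "j \<in> {1..6}" "\<zeta> ^ j = 1"
  shows "j = 5"
proof (rule ccontr)
  assume "j \<noteq> 5"
  with j consider "\<zeta> = 1" | "\<zeta> ^ 2 = 1" | "\<zeta> ^ 3 = 1" | "\<zeta> ^ 4 = 1" | "\<zeta> ^ 6 = 1"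
    by (auto simp: numeral_eq_Suc le_Suc_eq)
  then show False
  proof cases
    case 2
    have "\<zeta> ^ 5 = \<zeta> * (\<zeta> ^ 2) ^ 2"
      by algebra
    then have "\<zeta> = 1"
      using \<zeta>(1) 2 by simp
    with \<zeta>(2) show False ..
  next
    case 3
    have "\<zeta> ^ 5 * \<zeta> = (\<zeta> ^ 3) ^ 2"
      by algebra
    then have "\<zeta> = 1"
      using \<zeta>(1) 3 by simp
    with \<zeta>(2) show False ..
  next
    case 4
    have "\<zeta> ^ 5 = \<zeta> ^ 4 * \<zeta>"
      by algebra
    then have "\<zeta> = 1"
      using \<zeta>(1) 4 by simp
    with \<zeta>(2) show False ..
  next
    case 5
    have "\<zeta> ^ 6 = \<zeta> ^ 5 * \<zeta>"
      by algebra
    then have "\<zeta> = 1"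
      using \<zeta>(1) 5 by simp
    with \<zeta>(2) show False ..
  qed (use \<zeta> in simp)
qed

lemma pos_mass_1_le_of_exponent_5:
  fixes \<psi> :: "'g::{ab_group_add,finite} \<Rightarrow> complex"
  assumes \<psi>: "character \<psi>" and exp5: "\<And>x. \<psi> x ^ 5 = 1" and g: "\<psi> g \<noteq> 1"
  shows "pos_mass \<psi> 1 \<le> 407/1250 * real CARD('g)"
proof -
  have "\<psi> g ^ 1 \<noteq> 1" "\<psi> g ^ 2 \<noteq> 1"
    using root_of_unity_5_power_eq_1[OF exp5 g, of 2] g by auto
  then have "(\<Sum>x\<in>UNIV. (1 * \<psi> x) ^ 1) = 0" "(\<Sum>x\<in>UNIV. (1 * \<psi> x) ^ 2) = 0"
    using sum_power_character_eq_0[OF \<psi>] by blast+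
  then have s: "(\<Sum>x\<in>UNIV. Re (\<psi> x)) = 0" "(\<Sum>x\<in>UNIV. Re (\<psi> x ^ 2)) = 0"
    by (simp_all add: Re_sum[symmetric])
  have "pos_mass \<psi> 1 \<le> (\<Sum>x\<in>UNIV. 407/1250 + 1193/2500 * Re (\<psi> x) + 493/2500 * Re (\<psi> x ^ 2))"
    unfolding pos_mass_def by (rule sum_mono) (simp only: mult_1, rule pos_part_Re_root_of_unity_5[OF exp5])
  also have "\<dots> = 407/1250 * real CARD('g)"
    using s by (simp add: sum.distrib sum_divide_distrib[symmetric] sum_distrib_left[symmetric])
  finally show ?thesis .
qed

lemma pos_mass_le_of_exponent_5:
  fixes \<psi> :: "'g::{ab_group_add,finite} \<Rightarrow> complex"
  assumes \<psi>: "character \<psi>" and exp5: "\<And>x. \<psi> x ^ 5 = 1" and g: "\<psi> g \<noteq> 1"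
    and w: "cmod w = 1"
  shows "pos_mass \<psi> w \<le> 129/384 * real CARD('g)"
proof -
  define v where "v x = w * \<psi> x" for x
  have unit: "cmod (v x) = 1" for x
    unfolding v_def using w \<psi> by (rule norm_mult_character)
  have "\<psi> g ^ 1 \<noteq> 1"
    using g by simp
  then have "(\<Sum>x\<in>UNIV. v x ^ 1) = 0"
    unfolding v_def by (rule sum_power_character_eq_0[OF \<psi>])
  then have s1: "(\<Sum>x\<in>UNIV. Re (v x)) = 0"
    by (simp only: Re_sum[symmetric] power_one_right) simp
  have "\<psi> g ^ 2 \<noteq> 1" "\<psi> g ^ 4 \<noteq> 1"
    using root_of_unity_5_power_eq_1[OF exp5 g, of 2] root_of_unity_5_power_eq_1[OF exp5 g, of 4]
    by auto
  then have s: "(\<Sum>x\<in>UNIV. v x ^ 2) = 0" "(\<Sum>x\<in>UNIV. v x ^ 4) = 0"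
    unfolding v_def using sum_power_character_eq_0[OF \<psi>] by blast+
  have "pos_mass \<psi> w \<le> (\<Sum>x\<in>UNIV. Re (v x) / 2 + 43/384 + 29/48 * Re (v x)^2 - 5/24 * Re (v x)^4)"
    unfolding pos_mass_def v_def[symmetric]
  proof (rule sum_mono)
    fix x
    have "\<bar>Re (v x)\<bar> \<le> 1"
      using abs_Re_le_cmod[of "v x"] unit[of x] by simp
    then show "pos_part (Re (v x)) \<le> Re (v x) / 2 + 43/384 + 29/48 * Re (v x)^2 - 5/24 * Re (v x)^4"
      by (rule pos_part_le_poly4)
  qed
  also have "\<dots> = (\<Sum>x\<in>UNIV. Re (v x)) / 2 + 43/384 * real CARD('g) + 29/48 * (\<Sum>x\<in>UNIV. Re (v x)^2)
      - 5/24 * (\<Sum>x\<in>UNIV. Re (v x)^4)"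
    by (simp add: sum.distrib sum_subtractf sum_distrib_left sum_divide_distrib)
  also have "\<dots> = 129/384 * real CARD('g)"
    using s1 sum_Re_power2[of v, OF unit s(1)] sum_Re_power4[of v, OF unit s] by simp
  finally show ?thesis .
qed

lemma power_4_or_power_5_eq_1:
  fixes z :: complex
  assumes "j \<in> {1..6}" "z ^ j = 1"
    and "\<not> (z ^ 3 = 1 \<and> z \<noteq> 1)" "\<not> (z ^ 6 = 1 \<and> z ^ 2 \<noteq> 1 \<and> z ^ 3 \<noteq> 1)"
  shows "z ^ 4 = 1 \<or> z ^ 5 = 1"
proof (cases "z ^ 2 = 1")
  case True
  have "z ^ 4 = (z ^ 2) ^ 2"
    by algebra
  then show ?thesis
    using True by simp
next
  case False
  then show ?thesis
    using assms by (cases "z = 1") (auto simp: numeral_eq_Suc le_Suc_eq)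
qed

lemma mult_power_ne_1_of_orders_5_4:
  fixes a b :: complex
  assumes a: "a ^ 5 = 1" "a ^ 4 \<noteq> 1" and b: "b ^ 4 = 1" "b ^ 5 \<noteq> 1" and j: "j \<in> {1..6}"
  shows "(a * b) ^ j \<noteq> 1"
proof
  assume ab: "(a * b) ^ j = 1"
  have "a ^ (j * 4) * b ^ (j * 4) = 1"
    using ab by (simp add: power_mult flip: power_mult_distrib)
  moreover have "b ^ (j * 4) = 1"
    using b(1) by (simp add: mult.commute[of j] power_mult)
  ultimately have "a ^ (j * 4) = 1"
    by simp
  moreover have "a ^ (j * 5) = 1"
    using a(1) by (simp add: mult.commute[of j] power_mult)
  moreover have "a ^ (j * 5) = a ^ j * a ^ (j * 4)"
    unfolding power_add[symmetric] by (simp add: algebra_simps)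
  ultimately have aj: "a ^ j = 1"
    by simp
  have "a \<noteq> 1"
    using a(2) by auto
  then have "j = 5"
    using root_of_unity_5_power_eq_1[OF a(1) _ j aj] by simp
  then show False
    using ab aj b(2) by (simp add: power_mult_distrib)
qed

lemma nonreal_character_cases:
  fixes \<psi> :: "'g::{ab_group_add,finite} \<Rightarrow> complex"
  assumes \<psi>: "character \<psi>"
  obtains (order_gt_6) g where "\<And>j. j \<in> {1..6} \<Longrightarrow> \<psi> g ^ j \<noteq> 1"
    | (order_3) g where "\<psi> g ^ 3 = 1" "\<psi> g \<noteq> 1"
    | (exponent_4) "\<And>x. \<psi> x ^ 4 = 1"
    | (exponent_5) "\<And>x. \<psi> x ^ 5 = 1"
proof -
  consider (order_gt_6) g where "\<And>j. j \<in> {1..6} \<Longrightarrow> \<psi> g ^ j \<noteq> 1"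
    | (order_3) g where "\<psi> g ^ 3 = 1" "\<psi> g \<noteq> 1"
    | (small) "\<And>x. \<exists>j\<in>{1..6}. \<psi> x ^ j = 1" "\<And>x. \<not> (\<psi> x ^ 3 = 1 \<and> \<psi> x \<noteq> 1)"
    by blast
  then show thesis
  proof cases
    case small
    have "\<not> (\<psi> x ^ 6 = 1 \<and> \<psi> x ^ 2 \<noteq> 1 \<and> \<psi> x ^ 3 \<noteq> 1)" for x
      using small(2)[of "x + x"] by (auto simp: character_add[OF \<psi>] power_mult[symmetric]
          simp flip: power2_eq_square)
    then have "\<psi> x ^ 4 = 1 \<or> \<psi> x ^ 5 = 1" for x
      using small power_4_or_power_5_eq_1 by blast
    moreover have False if "\<psi> x ^ 4 \<noteq> 1" "\<psi> y ^ 5 \<noteq> 1" for x y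
      using small(1)[of "x + y"] mult_power_ne_1_of_orders_5_4[of "\<psi> x" "\<psi> y"]
        \<open>\<And>x. \<psi> x ^ 4 = 1 \<or> \<psi> x ^ 5 = 1\<close> that by (metis character_add[OF \<psi>])
    ultimately show thesis
      using that(3,4) by blast
  qed (use that in blast)+
qed

lemma pos_mass_add_le_of_nonreal:
  fixes \<psi> :: "'g::{ab_group_add,finite} \<Rightarrow> complex"
  assumes \<psi>: "character \<psi>" and nonreal: "\<psi> g ^ 2 \<noteq> 1" and w: "cmod w = 1"
  shows "pos_mass \<psi> 1 + pos_mass \<psi> w \<le> 2 * real CARD('g) / 3"
proof -
  have w1: "cmod (1::complex) = 1"
    by simp
  from \<psi> show ?thesis
  proof (cases rule: nonreal_character_cases)
    case (order_gt_6 h)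
    then show ?thesis
      using pos_mass_le_of_order_gt_6[OF \<psi> _ w1] pos_mass_le_of_order_gt_6[OF \<psi> _ w] by fastforce
  next
    case (order_3 h)
    then show ?thesis
      using pos_mass_le_of_order_3[OF \<psi> _ _ w1] pos_mass_le_of_order_3[OF \<psi> _ _ w] by fastforce
  next
    case exponent_4
    then show ?thesis
      using pos_mass_1_of_exponent_4[OF \<psi> _ nonreal] pos_mass_le_of_exponent_4[OF \<psi> _ nonreal w]
      by fastforce
  next
    case exponent_5
    have "\<psi> g \<noteq> 1"
      using nonreal by auto
    then show ?thesis
      using exponent_5 pos_mass_1_le_of_exponent_5[OF \<psi>] pos_mass_le_of_exponent_5[OF \<psi> _ _ w]
      by fastforce
  qed
qed

text \<open>For a non-real character, \<open>w\<close> is the phase that turns \<open>\<psi>(T)\<close> into \<open>|\<psi>(T)|\<close>; the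
  eigenvalue equation \<open>(d - \<psi>(R)) (d - \<psi>(S)) = |\<psi>(T)|\<^sup>2\<close> is then incompatible with
  \<open>d > 2n/3\<close>, since \<open>\<psi>(R), \<psi>(S) \<le> pos_mass \<psi> 1\<close> and \<open>|\<psi>(T)| \<le> pos_mass \<psi> w\<close>.\<close>

lemma nonreal_character_eigenvalue_le:
  fixes \<psi> :: "'g::{ab_group_add,finite} \<Rightarrow> complex"
  assumes \<psi>: "character \<psi>" and nonreal: "\<psi> g ^ 2 \<noteq> 1"
    and d: "(d - Re (\<Sum>x\<in>R. \<psi> x)) * (d - Re (\<Sum>x\<in>S. \<psi> x)) = (cmod (\<Sum>x\<in>T. \<psi> x))\<^sup>2"
  shows "d \<le> 2 * real CARD('g) / 3"
proof (rule ccontr)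
  assume gt: "\<not> d \<le> 2 * real CARD('g) / 3"
  define t where "t = (\<Sum>x\<in>T. \<psi> x)"
  define w where "w = (if t = 0 then 1 else cnj t / complex_of_real (cmod t))"
  have w: "cmod w = 1"
    by (simp add: w_def norm_divide)
  have "Re (w * t) = cmod t"
  proof (cases "t = 0")
    case False
    then have "w * t = complex_of_real ((cmod t)\<^sup>2) / complex_of_real (cmod t)"
      unfolding w_def using complex_norm_square[of t] by (simp add: mult.commute)
    then show ?thesis
      using False by (simp add: power2_eq_square)
  qed (simp add: w_def)
  then have "cmod t \<le> pos_mass \<psi> w"
    using Re_mult_sum_le_pos_mass[of w \<psi> T] by (simp add: t_def)
  moreover have "Re (\<Sum>x\<in>R. \<psi> x) \<le> pos_mass \<psi> 1" "Re (\<Sum>x\<in>S. \<psi> x) \<le> pos_mass \<psi> 1"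
    using Re_mult_sum_le_pos_mass[of 1 \<psi>] by simp_all
  ultimately have "cmod t < d - Re (\<Sum>x\<in>R. \<psi> x)" "cmod t < d - Re (\<Sum>x\<in>S. \<psi> x)"
    using pos_mass_add_le_of_nonreal[OF \<psi> nonreal w] gt by linarith+
  then have "cmod t * cmod t < (d - Re (\<Sum>x\<in>R. \<psi> x)) * (d - Re (\<Sum>x\<in>S. \<psi> x))"
    using norm_ge_zero[of t] by (intro mult_strict_mono) linarith+
  then show False
    using d by (simp add: t_def power2_eq_square)
qed

section \<open>Real characters\<close>


lemma real_character_values:
  fixes \<psi> :: "'g \<Rightarrow> complex"
  assumes "\<And>x. \<psi> x ^ 2 = 1"
  shows "Im (\<psi> x) = 0" "Re (\<psi> x) = 1 \<or> Re (\<psi> x) = -1"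
  using assms[of x] by (auto simp: power2_eq_1_iff)

lemma real_characters_mult_nontrivial:
  fixes \<psi>1 \<psi>2 :: "'g \<Rightarrow> complex"
  assumes "\<And>x. \<psi>1 x ^ 2 = 1" and "\<psi>1 \<noteq> \<psi>2"
  shows "(\<lambda>x. \<psi>1 x * \<psi>2 x) \<noteq> (\<lambda>_. 1)"
proof
  assume prod: "(\<lambda>x. \<psi>1 x * \<psi>2 x) = (\<lambda>_. 1)"
  have "\<psi>1 x = \<psi>2 x" for x
  proof -
    have "\<psi>1 x ^ 2 * \<psi>2 x = \<psi>1 x"
      using fun_cong[OF prod, of x] by (simp add: power2_eq_square mult.assoc)
    then show ?thesis
      using assms(1)[of x] by simp
  qed
  with assms(2) show False
    by blast
qed

text \<open>Pointwise, \<open>e\<^sub>1 \<rho>\<^sub>1 + e\<^sub>2 \<rho>\<^sub>2 \<le> (1 + e\<^sub>1 \<rho>\<^sub>1) (1 + e\<^sub>2 \<rho>\<^sub>2) / 2\<close> for \<open>\<rho>\<^sub>i, e\<^sub>i \<in> {\<plusminus>1}\<close>, and the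
  right-hand side is nonnegative off \<open>X\<close>; by orthogonality of \<open>1, \<rho>\<^sub>1, \<rho>\<^sub>2, \<rho>\<^sub>1 \<rho>\<^sub>2\<close> it sums
  to \<open>n/2\<close>.\<close>

lemma sum_two_real_characters_le:
  fixes \<psi>1 \<psi>2 :: "'g::{ab_group_add,finite} \<Rightarrow> complex"
  assumes \<psi>: "character \<psi>1" "character \<psi>2" "\<And>x. \<psi>1 x ^ 2 = 1" "\<And>x. \<psi>2 x ^ 2 = 1"
    and nontrivial: "\<psi>1 \<noteq> (\<lambda>_. 1)" "\<psi>2 \<noteq> (\<lambda>_. 1)" and "\<psi>1 \<noteq> \<psi>2"
    and e: "e1 = 1 \<or> e1 = -1" "e2 = 1 \<or> e2 = -1"
  shows "e1 * Re (\<Sum>x\<in>X. \<psi>1 x) + e2 * Re (\<Sum>x\<in>X. \<psi>2 x) \<le> real CARD('g) / 2"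
proof -
  define \<rho>1 where "\<rho>1 x = Re (\<psi>1 x)" for x
  define \<rho>2 where "\<rho>2 x = Re (\<psi>2 x)" for x
  have s1: "(\<Sum>x\<in>UNIV. \<rho>1 x) = 0" and s2: "(\<Sum>x\<in>UNIV. \<rho>2 x) = 0"
    using sum_nontrivial_character[OF \<psi>(1) nontrivial(1)] sum_nontrivial_character[OF \<psi>(2) nontrivial(2)]
    by (simp_all add: \<rho>1_def \<rho>2_def Re_sum[symmetric])
  have "(\<lambda>x. \<psi>1 x * \<psi>2 x) \<noteq> (\<lambda>_. 1)"
    using real_characters_mult_nontrivial[OF \<psi>(3) \<open>\<psi>1 \<noteq> \<psi>2\<close>] .
  then have "(\<Sum>x\<in>UNIV. \<psi>1 x * \<psi>2 x) = 0"
    by (rule sum_nontrivial_character[OF character_mult[OF \<psi>(1,2)]])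
  moreover have "Re (\<psi>1 x * \<psi>2 x) = \<rho>1 x * \<rho>2 x" for x
    using real_character_values(1)[of \<psi>1, OF \<psi>(3)] by (simp add: \<rho>1_def \<rho>2_def)
  ultimately have s12: "(\<Sum>x\<in>UNIV. \<rho>1 x * \<rho>2 x) = 0"
    using Re_sum[of "\<lambda>x. \<psi>1 x * \<psi>2 x" UNIV] by simp
  have pm: "\<rho>1 x = 1 \<or> \<rho>1 x = -1" "\<rho>2 x = 1 \<or> \<rho>2 x = -1" for x
    using real_character_values(2)[OF \<psi>(3)] real_character_values(2)[OF \<psi>(4)]
    by (simp_all add: \<rho>1_def \<rho>2_def)
  have "e1 * Re (\<Sum>x\<in>X. \<psi>1 x) + e2 * Re (\<Sum>x\<in>X. \<psi>2 x)
      = (\<Sum>x\<in>UNIV. if x \<in> X then e1 * \<rho>1 x + e2 * \<rho>2 x else 0)"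
    by (simp add: \<rho>1_def \<rho>2_def Re_sum sum.distrib sum_distrib_left sum.If_cases)
  also have "\<dots> \<le> (\<Sum>x\<in>UNIV. (1 + e1 * \<rho>1 x) * (1 + e2 * \<rho>2 x) / 2)"
  proof (rule sum_mono)
    fix x
    show "(if x \<in> X then e1 * \<rho>1 x + e2 * \<rho>2 x else 0) \<le> (1 + e1 * \<rho>1 x) * (1 + e2 * \<rho>2 x) / 2"
      using e pm[of x] by (elim disjE) auto
  qed
  also have "\<dots> = (\<Sum>x\<in>UNIV. 1/2 + e1/2 * \<rho>1 x + e2/2 * \<rho>2 x + e1 * e2/2 * (\<rho>1 x * \<rho>2 x))"
    by (intro sum.cong refl) (simp add: field_simps)
  also have "\<dots> = real CARD('g) / 2"
    using s1 s2 s12 by (simp add: sum.distrib sum_divide_distrib[symmetric] sum_distrib_left[symmetric])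
  finally show ?thesis .
qed

lemma large_eigenvalue_forces_large_offdiagonal:
  fixes m r s d T :: real
  assumes "0 < m" "r \<le> 3 * m" "s \<le> 3 * m" "4 * m < d" "(d - r) * (d - s) = T\<^sup>2"
  shows "m * (7 * m - r - s) < T\<^sup>2"
proof -
  have "(4 * m - r) * (4 * m - s) < (d - r) * (d - s)"
    using assms by (intro mult_strict_mono) auto
  moreover have "0 \<le> (3 * m - r) * (3 * m - s)"
    using assms by simp
  ultimately show ?thesis
    using assms(5) by (simp add: algebra_simps)
qed

text \<open>With \<open>P\<^sub>i = 7m - r\<^sub>i - s\<^sub>i\<close> the previous lemma gives \<open>T\<^sub>i\<^sup>2 > m P\<^sub>i\<close>, where \<open>P\<^sub>i \<ge> m\<close> and
  \<open>P\<^sub>1 + P\<^sub>2 \<ge> 8m\<close>; hence \<open>(T\<^sub>1 + T\<^sub>2)\<^sup>2 > m (P\<^sub>1 + P\<^sub>2) + 2 m\<^sup>2 \<ge> 10 m\<^sup>2 > (3m)\<^sup>2\<close>.\<close>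

lemma two_large_eigenvalues_impossible:
  fixes m r1 r2 s1 s2 T1 T2 d1 d2 :: real
  assumes m: "0 < m"
    and r: "r1 \<le> 3 * m" "r2 \<le> 3 * m" "s1 \<le> 3 * m" "s2 \<le> 3 * m"
    and rs: "r1 + r2 \<le> 3 * m" "s1 + s2 \<le> 3 * m"
    and T: "0 \<le> T1" "0 \<le> T2" "T1 + T2 \<le> 3 * m"
    and d: "4 * m < d1" "4 * m < d2"
    and eq: "(d1 - r1) * (d1 - s1) = T1\<^sup>2" "(d2 - r2) * (d2 - s2) = T2\<^sup>2"
  shows False
proof -
  define P1 where "P1 = 7 * m - r1 - s1"
  define P2 where "P2 = 7 * m - r2 - s2"
  have T1P: "m * P1 < T1\<^sup>2" and T2P: "m * P2 < T2\<^sup>2"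
    unfolding P1_def P2_def
    by (rule large_eigenvalue_forces_large_offdiagonal[OF m r(1,3) d(1) eq(1)],
        rule large_eigenvalue_forces_large_offdiagonal[OF m r(2,4) d(2) eq(2)])
  have P: "m \<le> P1" "m \<le> P2" "8 * m \<le> P1 + P2"
    using r rs by (simp_all add: P1_def P2_def)
  have mP: "m * m \<le> m * P1" "m * m \<le> m * P2"
    using m P by simp_all
  then have "(m * m) * (m * m) < T1\<^sup>2 * T2\<^sup>2"
    using T1P T2P m by (smt (verit) mult_mono mult_strict_mono zero_less_mult_iff)
  then have "(m * m)\<^sup>2 < (T1 * T2)\<^sup>2"
    unfolding power_mult_distrib[of T1 T2 2] power2_eq_square[of "m * m"] .
  then have TT: "m * m < T1 * T2"
    by (rule power2_less_imp_less) (use T in simp)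
  have "(T1 + T2)\<^sup>2 = T1\<^sup>2 + T2\<^sup>2 + 2 * (T1 * T2)"
    by (simp add: power2_eq_square algebra_simps)
  moreover have "8 * (m * m) \<le> m * P1 + m * P2"
    using mult_left_mono[OF P(3), of m] m by (simp add: algebra_simps)
  moreover have "(T1 + T2)\<^sup>2 \<le> 9 * (m * m)"
    using power_mono[OF T(3), of 2] T by (simp add: power2_eq_square)
  moreover have "0 < m * m"
    using m by simp
  ultimately show False
    using T1P T2P TT by linarith
qed

lemma real_characters_not_both_large:
  fixes \<psi>1 \<psi>2 :: "'g::{ab_group_add,finite} \<Rightarrow> complex"
  assumes \<psi>: "character \<psi>1" "character \<psi>2" "\<And>x. \<psi>1 x ^ 2 = 1" "\<And>x. \<psi>2 x ^ 2 = 1"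
    and nontrivial: "\<psi>1 \<noteq> (\<lambda>_. 1)" "\<psi>2 \<noteq> (\<lambda>_. 1)" and "\<psi>1 \<noteq> \<psi>2"
    and d1: "(d1 - Re (\<Sum>x\<in>R. \<psi>1 x)) * (d1 - Re (\<Sum>x\<in>S. \<psi>1 x)) = (cmod (\<Sum>x\<in>T. \<psi>1 x))\<^sup>2"
    and d2: "(d2 - Re (\<Sum>x\<in>R. \<psi>2 x)) * (d2 - Re (\<Sum>x\<in>S. \<psi>2 x)) = (cmod (\<Sum>x\<in>T. \<psi>2 x))\<^sup>2"
  shows "\<not> (2 * real CARD('g) / 3 < d1 \<and> 2 * real CARD('g) / 3 < d2)"
proof
  assume large: "2 * real CARD('g) / 3 < d1 \<and> 2 * real CARD('g) / 3 < d2"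
  define m where "m = real CARD('g) / 6"
  have pair: "e1 * Re (\<Sum>x\<in>X. \<psi>1 x) + e2 * Re (\<Sum>x\<in>X. \<psi>2 x) \<le> 3 * m"
    if "e1 = 1 \<or> e1 = -1" "e2 = 1 \<or> e2 = -1" for X e1 e2
    using sum_two_real_characters_le[OF \<psi> nontrivial \<open>\<psi>1 \<noteq> \<psi>2\<close> that] by (simp add: m_def)
  have norm_T: "cmod (\<Sum>x\<in>T. \<psi> x) = \<bar>Re (\<Sum>x\<in>T. \<psi> x)\<bar>" if "\<And>x. \<psi> x ^ 2 = 1" for \<psi> :: "'g \<Rightarrow> complex"
    using real_character_values(1)[of \<psi>, OF that] by (simp add: cmod_def Im_sum)
  have T: "cmod (\<Sum>x\<in>T. \<psi>1 x) + cmod (\<Sum>x\<in>T. \<psi>2 x) \<le> 3 * m"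
    unfolding norm_T[OF \<psi>(3)] norm_T[OF \<psi>(4)]
    using pair[of 1 1 T] pair[of 1 "-1" T] pair[of "-1" 1 T] pair[of "-1" "-1" T]
    by (simp add: abs_if)
  have RS: "Re (\<Sum>x\<in>R. \<psi>1 x) + Re (\<Sum>x\<in>R. \<psi>2 x) \<le> 3 * m"
    "Re (\<Sum>x\<in>S. \<psi>1 x) + Re (\<Sum>x\<in>S. \<psi>2 x) \<le> 3 * m"
    using pair[of 1 1] by simp_all
  have half: "Re (\<Sum>x\<in>X. \<psi> x) \<le> 3 * m" if "character \<psi>" "\<psi> \<noteq> (\<lambda>_. 1)"
    for X and \<psi> :: "'g \<Rightarrow> complex"
    using Re_sum_nontrivial_character_le_half[OF that] by (simp add: m_def)
  have "0 < m" "4 * m < d1" "4 * m < d2"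
    using large by (simp_all add: m_def)
  from two_large_eigenvalues_impossible[OF this(1) half[OF \<psi>(1) nontrivial(1)]
      half[OF \<psi>(2) nontrivial(2)] half[OF \<psi>(1) nontrivial(1)] half[OF \<psi>(2) nontrivial(2)]
      RS norm_ge_zero norm_ge_zero T this(2,3) d1 d2]
  show False .
qed

section \<open>At most two eigenvalues above 2n/3\<close>


lemma card_le_1_of_one_per_block:
  fixes P :: "'a::finite \<Rightarrow> bool \<Rightarrow> bool"
  assumes "\<And>y y' i i'. P y i \<Longrightarrow> P y' i' \<Longrightarrow> y = y'" and "\<And>y. \<not> (P y False \<and> P y True)"
  shows "card {(y, i). P y i} \<le> 1"
proof -
  have "a = b" if mem: "a \<in> {(y, i). P y i}" "b \<in> {(y, i). P y i}" for a b
  proof -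
    obtain y i y' j where ab: "a = (y, i)" "b = (y', j)" "P y i" "P y' j"
      using mem by auto
    then have "y = y'"
      using assms(1) by blast
    then show "a = b"
      using ab assms(2)[of y] by (cases i; cases j) auto
  qed
  then show ?thesis
    using card_le_Suc0_iff_eq[of "{(y, i). P y i}"] by simp
qed

text \<open>Here \<open>y\<^sub>0\<close> will index the trivial character and \<open>D y\<close> the two eigenvalues of the block
  of the character \<open>y\<close>.\<close>

lemma card_large_values_le_2:
  fixes D :: "'a::finite \<Rightarrow> bool \<Rightarrow> real"
  assumes one_block: "\<And>y. y \<noteq> y0 \<Longrightarrow> \<not> (c < D y False \<and> c < D y True)"
    and trivial_block: "\<And>y i. c < D y0 False \<Longrightarrow> c < D y0 True \<Longrightarrow> y \<noteq> y0 \<Longrightarrow> \<not> c < D y i"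
    and two_blocks: "\<And>y y' i i'. y \<noteq> y0 \<Longrightarrow> y' \<noteq> y0 \<Longrightarrow> y \<noteq> y' \<Longrightarrow> \<not> (c < D y i \<and> c < D y' i')"
  shows "card {(y, i). c < D y i} \<le> 2"
proof (cases "c < D y0 False \<and> c < D y0 True")
  case True
  have "{(y, i). c < D y i} \<subseteq> {(y0, False), (y0, True)}"
  proof
    fix u
    assume "u \<in> {(y, i). c < D y i}"
    then obtain y i where u: "u = (y, i)" "c < D y i"
      by auto
    then have "y = y0"
      using trivial_block True by blast
    then show "u \<in> {(y0, False), (y0, True)}"
      using u by (cases i) simp_all
  qed
  then have "card {(y, i). c < D y i} \<le> card {(y0, False), (y0, True)}"
    by (rule card_mono[rotated]) simp
  then show ?thesis
    by simp
next
  case False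
  have "card {(y, i). c < D y i \<and> y = y0} \<le> 1"
    using False by (intro card_le_1_of_one_per_block) auto
  moreover have "card {(y, i). c < D y i \<and> y \<noteq> y0} \<le> 1"
    using one_block two_blocks by (intro card_le_1_of_one_per_block) blast+
  moreover have "{(y, i). c < D y i} = {(y, i). c < D y i \<and> y = y0} \<union> {(y, i). c < D y i \<and> y \<noteq> y0}"
    by auto
  ultimately show ?thesis
    using card_Un_le[of "{(y, i). c < D y i \<and> y = y0}" "{(y, i). c < D y i \<and> y \<noteq> y0}"] by simp
qed

lemma semi_cayley_card_large_eigenvalues:
  fixes R S T :: "'g::{ab_group_add,finite} set"
    and \<beta> :: "'g \<Rightarrow> 'g \<Rightarrow> complex" and d :: "'g \<Rightarrow> bool \<Rightarrow> real"
  assumes \<beta>: "bij_betw \<beta> UNIV {f. character f}"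
    and sum: "\<And>y. d y False + d y True = Re (\<Sum>x\<in>R. \<beta> y x) + Re (\<Sum>x\<in>S. \<beta> y x)"
    and prod: "\<And>y. d y False * d y True
      = Re (\<Sum>x\<in>R. \<beta> y x) * Re (\<Sum>x\<in>S. \<beta> y x) - (cmod (\<Sum>x\<in>T. \<beta> y x))\<^sup>2"
  shows "card {(y, i). 2 * real CARD('g) / 3 < d y i} \<le> 2"
proof -
  have chars: "character (\<beta> y)" for y
    using \<beta> by (auto simp: bij_betw_def)
  have inj: "\<beta> y = \<beta> y' \<Longrightarrow> y = y'" for y y'
    using \<beta> by (auto simp: bij_betw_def inj_on_def)
  obtain y0 where y0: "\<beta> y0 = (\<lambda>_. 1)"
    using bij_betw_imp_surj_on[OF \<beta>] character_const_1 by (metis (mono_tags) imageE mem_Collect_eq)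
  have nontrivial: "\<beta> y \<noteq> (\<lambda>_. 1)" if "y \<noteq> y0" for y
    using inj y0 that by metis
  have eq: "(d y i - Re (\<Sum>x\<in>R. \<beta> y x)) * (d y i - Re (\<Sum>x\<in>S. \<beta> y x)) = (cmod (\<Sum>x\<in>T. \<beta> y x))\<^sup>2"
    for y i
    using block_eigenvalue_eq[OF sum prod] by (cases i) auto
  show ?thesis
  proof (rule card_large_values_le_2[of y0])
    show "\<not> (2 * real CARD('g) / 3 < d y False \<and> 2 * real CARD('g) / 3 < d y True)"
      if "y \<noteq> y0" for y
      by (rule nontrivial_character_block_not_both_large[OF chars nontrivial[OF that] sum prod])
    show "\<not> 2 * real CARD('g) / 3 < d y i"
      if "2 * real CARD('g) / 3 < d y0 False" "2 * real CARD('g) / 3 < d y0 True" "y \<noteq> y0" for y i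
      using trivial_block_large_excludes_large_eigenvalue[OF chars nontrivial[OF that(3)] _ _ that(1,2) eq]
        sum[of y0] prod[of y0] by (simp add: y0 not_less)
    show "\<not> (2 * real CARD('g) / 3 < d y i \<and> 2 * real CARD('g) / 3 < d y' i')"
      if "y \<noteq> y0" "y' \<noteq> y0" "y \<noteq> y'" for y y' i i'
    proof (cases "\<forall>x. \<beta> y x ^ 2 = 1 \<and> \<beta> y' x ^ 2 = 1")
      case True
      then show ?thesis
        using real_characters_not_both_large[OF chars chars _ _ nontrivial[OF that(1)]
            nontrivial[OF that(2)] _ eq eq] inj that(3) by blast
    next
      case False
      then show ?thesis
        using nonreal_character_eigenvalue_le[OF chars _ eq] by (meson not_le)
    qed
  qed
qed

lemma nth_largest_le:
  fixes M :: "'a::linorder multiset"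
  assumes k: "0 < k" "k \<le> size M" and few: "size (filter_mset (\<lambda>x. c < x) M) < k"
  shows "rev (sorted_list_of_multiset M) ! (k - 1) \<le> c"
proof (rule ccontr)
  define L where "L = rev (sorted_list_of_multiset M)"
  have len: "length L = size M"
    unfolding L_def by (metis length_rev mset_sorted_list_of_multiset size_mset)
  assume "\<not> rev (sorted_list_of_multiset M) ! (k - 1) \<le> c"
  then have last: "c < L ! (k - 1)"
    by (simp add: L_def)
  have mono: "L ! (k - 1) \<le> L ! i" if "i \<le> k - 1" for i
    using sorted_rev_nth_mono[of L i "k - 1"] that k len by (simp add: L_def)
  have "c < L ! i" if "i < k" for i
    using last mono[of i] that by fastforce
  then have "\<forall>x\<in>set (take k L). c < x"
    by (auto simp: in_set_conv_nth)
  then have "size (filter_mset (\<lambda>x. c < x) (mset (take k L))) = k"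
    using k len by (simp flip: mset_filter)
  moreover have "mset L = mset (take k L) + mset (drop k L)"
    by (simp flip: mset_append)
  ultimately have "k \<le> size (filter_mset (\<lambda>x. c < x) (mset L))"
    by simp
  then show False
    using few by (simp add: L_def)
qed

theorem theorem3p9:
  fixes R S T :: "'g::{ab_group_add, finite} set"
  assumes "uminus ` R = R" and "uminus ` S = S"
    and "0 \<notin> R \<union> S"
    and "CARD('g) \<ge> 2"
  shows "kth_largest_eigenvalue 3 (semi_cayley_adj_matrix R S T) / (2 * real CARD('g)) \<le> 1 / 3"
proof -
  obtain \<beta> :: "'g \<Rightarrow> 'g \<Rightarrow> complex" and d :: "'g \<Rightarrow> bool \<Rightarrow> real"
    where \<beta>: "bij_betw \<beta> UNIV {f. character f}"
      and eigenvalues: "eigenvalues_mset (semi_cayley_adj_matrix R S T)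
        = image_mset (\<lambda>(y, i). d y i) (mset_set UNIV)"
      and sum: "\<And>y. d y False + d y True = Re (\<Sum>x\<in>R. \<beta> y x) + Re (\<Sum>x\<in>S. \<beta> y x)"
      and prod: "\<And>y. d y False * d y True
        = Re (\<Sum>x\<in>R. \<beta> y x) * Re (\<Sum>x\<in>S. \<beta> y x) - (cmod (\<Sum>x\<in>T. \<beta> y x))\<^sup>2"
    using semi_cayley_eigenvalues[OF assms(1,2)] by blast
  let ?c = "2 * real CARD('g) / 3"
  have "size (filter_mset (\<lambda>x. ?c < x) (eigenvalues_mset (semi_cayley_adj_matrix R S T))) < 3"
    using semi_cayley_card_large_eigenvalues[OF \<beta> sum prod]
    by (simp add: eigenvalues filter_mset_image_mset case_prod_unfold)
  moreover have "3 \<le> size (eigenvalues_mset (semi_cayley_adj_matrix R S T))"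
    using assms(4) by (simp add: eigenvalues)
  ultimately have "kth_largest_eigenvalue 3 (semi_cayley_adj_matrix R S T) \<le> ?c"
    unfolding kth_largest_eigenvalue_def by (intro nth_largest_le) simp_all
  then show ?thesis
    by (simp add: field_simps)
qed

end
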